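(* Let $n\ge 1$, $d\ge 1$, and $\eta>0$. Consider the signed HJMR model: $n$ agents with opinions $\mathbf{X}_t^{(i)}\in\mathbb{S}^{d-1}$ updated by $\mathbf{X}_{t+1}^{(i)}=P_{\mathbb{S}^{d-1}}\big(\mathbf{X}_t^{(i)}+\eta\,\mathrm{sgn}(\langle\mathbf{X}_t^{(i)},\xi_t\rangle)\,\xi_t\big)$, $i=1,\ldots,n$, where $\xi_0,\xi_1,\ldots$ are i.i.d. from a distribution $\mathcal{D}$ on $\mathbb{S}^{d-1}$ for which there exist constants $C,C'>0$ with $C\mu(A)\le\Pr(\xi_t\in A)\le C'\mu(A)$ for every measurable $A\subseteq\mathbb{S}^{d-1}$, $\mu$ being the uniform (Haar) probability measure on $\mathbb{S}^{d-1}$. Then for every starting configuration $\mathbf{X}_0\in(\mathbb{S}^{d-1})^n$, almost surely $\rho(\mathbf{X}_t,P)\to 0$ (i.e., the system strongly polarizes).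
   Context: $\mathbb{S}^{d-1}$ is the unit sphere in $\mathbb{R}^d$, $P_{\mathbb{S}^{d-1}}(\mathbf{x})=\mathbf{x}/\|\mathbf{x}\|_2$, and $\mathrm{sgn}(0)=0$. The polarized set is $P=\{(\sigma_1\mathbf{x},\ldots,\sigma_n\mathbf{x}):\mathbf{x}\in\mathbb{S}^{d-1},\ \bm{\sigma}\in\{-1,1\}^n\}\subseteq(\mathbb{S}^{d-1})^n$, and $\rho(\mathbf{z},P)=\inf_{\mathbf{y}\in P}\|\mathbf{z}-\mathbf{y}\|_2$ (Euclidean distance in $(\mathbb{R}^d)^n$). *)

theory Defs
  imports "HOL-Probability.Probability"
begin

text \<open>Uniform (Haar) probability measure on the unit sphere S^(d-1) of real^'d,
  realised as the normalised cone measure: mu(A) = Leb{r x : x in A, 0 < r <= 1} / Leb(ball 0 1).\<close>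
definition sphere_mu :: "(real^'d) set \<Rightarrow> real" where
  "sphere_mu A = measure lebesgue {r *\<^sub>R x | r x. x \<in> A \<and> 0 < r \<and> r \<le> 1}
                 / measure lebesgue (ball (0::real^'d) 1)"

definition proj_sphere :: "real^'d \<Rightarrow> real^'d" where
  "proj_sphere y = (1 / norm y) *\<^sub>R y"

definition hjmr_step :: "real \<Rightarrow> real^'d \<Rightarrow> real^'d \<Rightarrow> real^'d" where
  "hjmr_step \<eta> xi x = proj_sphere (x + (\<eta> * sgn (x \<bullet> xi)) *\<^sub>R xi)"

fun hjmr_traj :: "real \<Rightarrow> real^'d^'n \<Rightarrow> (nat \<Rightarrow> real^'d) \<Rightarrow> nat \<Rightarrow> real^'d^'n" where
  "hjmr_traj \<eta> X0 xis 0 = X0"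
| "hjmr_traj \<eta> X0 xis (Suc t) = (\<chi> i. hjmr_step \<eta> (xis t) (hjmr_traj \<eta> X0 xis t $ i))"

definition polarized :: "(real^'d^'n) set" where
  "polarized = {(\<chi> i. \<sigma> i *\<^sub>R x) | x \<sigma>. x \<in> sphere 0 1 \<and> (\<forall>i. \<sigma> i \<in> {-1, 1})}"

end

theory Submission
  imports Defs
begin

text \<open>Fix an agent \<open>i0\<close> and measure the distance to polarization by the defect
  \<open>D = \<Sum>\<^sub>j min \<parallel>X\<^sub>i\<^sub>0 - X\<^sub>j\<parallel> \<parallel>X\<^sub>i\<^sub>0 + X\<^sub>j\<parallel>\<close>, which dominates \<open>\<rho>(X, P)\<close>.
  If the direction \<open>\<xi>\<close> satisfies \<open>|\<langle>X\<^sub>i\<^sub>0, \<xi>\<rangle>| > D\<close>, every agent lies, up to sign, in the open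
  hemisphere around \<open>\<xi>\<close>, where the update contracts distances by \<open>1 / sqrt (1 + \<eta>\<^sup>2)\<close>; so \<open>D\<close>
  shrinks geometrically unless a ``kick'' \<open>|\<langle>X\<^sub>i\<^sub>0, \<xi>\<rangle>| \<le> D\<close> occurs. By the upper density bound a kick
  has probability \<open>O(D)\<close>, so once \<open>D \<le> a\<close> the contraction ever fails with probability \<open>O(a)\<close>.
  By the lower density bound, from any past, a direction followed by \<open>K\<close> directions in a small cap
  around it (a reset, of probability bounded below) drives all agents close to \<open>\<plusminus>\<close> that direction,
  making \<open>D\<close> as small as we like. Repeating resets block by block, the probability that \<open>D\<close>
  does not tend to \<open>0\<close> is below every \<open>\<epsilon> > 0\<close>.\<close>

section \<open>One update step\<close>

lemma proj_sphere_eq_sgn: "proj_sphere y = sgn y"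
  by (simp add: proj_sphere_def sgn_div_norm divide_inverse_commute)

lemma hjmr_step_eq_sgn: "hjmr_step \<eta> z x = sgn (x + (\<eta> * sgn (x \<bullet> z)) *\<^sub>R z)"
  by (simp add: hjmr_step_def proj_sphere_eq_sgn)

lemma norm_sgn_diff_le:
  fixes a b :: "'a::real_inner"
  assumes "0 < m" "m \<le> norm a" "m \<le> norm b"
  shows "norm (sgn a - sgn b) \<le> norm (a - b) / m"
proof -
  have pos: "0 < norm a" "0 < norm b" using assms by linarith+
  have sq: "norm (x - y)^2 = norm x^2 + norm y^2 - 2 * (x \<bullet> y)" for x y :: 'a
    by (simp add: power2_norm_eq_inner inner_diff_left inner_diff_right inner_commute)
  have "norm (sgn a - sgn b)^2 = 2 - 2 * (a \<bullet> b) / (norm a * norm b)"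
    using pos by (simp add: sq norm_sgn sgn_div_norm field_simps)
  then have "norm (sgn a - sgn b)^2 * (norm a * norm b) = 2 * (norm a * norm b) - 2 * (a \<bullet> b)"
    using pos by (simp add: field_simps)
  also have "\<dots> = norm (a - b)^2 - (norm a - norm b)^2"
    unfolding sq[of a b] by (simp add: power2_eq_square algebra_simps)
  also have "\<dots> \<le> norm (a - b)^2" by simp
  finally have "norm (sgn a - sgn b)^2 * (norm a * norm b) \<le> norm (a - b)^2" .
  moreover have "m^2 \<le> norm a * norm b"
    using assms by (simp add: power2_eq_square mult_mono)
  ultimately have "norm (sgn a - sgn b)^2 * m^2 \<le> norm (a - b)^2"
    by (meson mult_left_mono order_trans zero_le_power2)
  then have "(norm (sgn a - sgn b) * m)^2 \<le> norm (a - b)^2"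
    by (simp add: power_mult_distrib)
  then have "norm (sgn a - sgn b) * m \<le> norm (a - b)"
    by (rule power2_le_imp_le) simp
  then show ?thesis using assms(1) by (simp add: field_simps)
qed

lemma norm_add_scaleR_power2:
  fixes x y :: "'a::real_inner"
  shows "norm (x + c *\<^sub>R y)^2 = norm x^2 + 2 * c * (x \<bullet> y) + c^2 * norm y^2"
proof -
  have "norm (x + y)^2 = norm x^2 + 2 * (x \<bullet> y) + norm y^2" for x y :: 'a
    by (simp add: power2_norm_eq_inner inner_add_left inner_add_right inner_commute)
  then show ?thesis by (simp add: power_mult_distrib)
qed

lemma norm_hjmr_step_arg_ge:
  fixes x z :: "real^'d"
  assumes "\<eta> \<ge> 0"
  shows "norm x \<le> norm (x + (\<eta> * sgn (x \<bullet> z)) *\<^sub>R z)"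
proof -
  have "norm (x + (\<eta> * sgn (x \<bullet> z)) *\<^sub>R z)^2
      = norm x^2 + 2 * \<eta> * \<bar>x \<bullet> z\<bar> + (\<eta> * sgn (x \<bullet> z))^2 * norm z^2"
    unfolding norm_add_scaleR_power2 by (simp add: abs_sgn[of "x \<bullet> z"] algebra_simps)
  also have "\<dots> \<ge> norm x^2" using assms by simp
  finally show ?thesis by (rule power2_le_imp_le) simp
qed

lemma norm_hjmr_step:
  fixes x z :: "real^'d"
  assumes "x \<noteq> 0" "\<eta> \<ge> 0"
  shows "norm (hjmr_step \<eta> z x) = 1"
  using norm_hjmr_step_arg_ge[OF assms(2), of x z] assms(1)
  by (auto simp: hjmr_step_eq_sgn norm_sgn)

lemma hjmr_step_uminus: "hjmr_step \<eta> z (- x) = - hjmr_step \<eta> z x"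
proof -
  have arg: "- x + (\<eta> * sgn (- x \<bullet> z)) *\<^sub>R z = - (x + (\<eta> * sgn (x \<bullet> z)) *\<^sub>R z)"
    by (simp add: sgn_minus algebra_simps)
  show ?thesis by (simp only: hjmr_step_eq_sgn arg sgn_minus)
qed

lemma hjmr_step_pos: "x \<bullet> z > 0 \<Longrightarrow> hjmr_step \<eta> z x = sgn (x + \<eta> *\<^sub>R z)"
  by (simp add: hjmr_step_eq_sgn)

definition hjmr_rate :: "real \<Rightarrow> real" where
  "hjmr_rate \<eta> = 1 / sqrt (1 + \<eta>^2)"

lemma hjmr_rate_pos: "0 < hjmr_rate \<eta>"
  by (simp add: hjmr_rate_def add_pos_nonneg)

lemma hjmr_rate_less_1: "\<eta> > 0 \<Longrightarrow> hjmr_rate \<eta> < 1"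
proof -
  assume "\<eta> > 0"
  then have "1 < sqrt (1 + \<eta>^2)" by (intro real_less_rsqrt) simp
  then show ?thesis unfolding hjmr_rate_def by (metis divide_less_eq_1_pos less_trans zero_less_one)
qed

lemma norm_add_scaleR_ge:
  fixes x z :: "'a::real_inner"
  assumes "norm x = 1" "norm z = 1" "x \<bullet> z \<ge> 0" "\<eta> \<ge> 0"
  shows "sqrt (1 + \<eta>^2) \<le> norm (x + \<eta> *\<^sub>R z)"
proof -
  have "norm (x + \<eta> *\<^sub>R z)^2 = 1 + 2 * \<eta> * (x \<bullet> z) + \<eta>^2"
    using assms unfolding norm_add_scaleR_power2 by simp
  also have "\<dots> \<ge> 1 + \<eta>^2" using assms by simp
  finally show ?thesis by (simp add: real_le_lsqrt)
qed

text \<open>On the open hemisphere around \<open>z\<close> the update is a translation by \<open>\<eta> z\<close> followed by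
  normalisation of vectors of norm at least \<open>sqrt (1 + \<eta>\<^sup>2)\<close>.\<close>
lemma hjmr_step_contract:
  fixes x y z :: "real^'d"
  assumes "norm x = 1" "norm y = 1" "norm z = 1" "x \<bullet> z > 0" "y \<bullet> z > 0" "\<eta> \<ge> 0"
  shows "norm (hjmr_step \<eta> z x - hjmr_step \<eta> z y) \<le> hjmr_rate \<eta> * norm (x - y)"
proof -
  have "norm (sgn (x + \<eta> *\<^sub>R z) - sgn (y + \<eta> *\<^sub>R z))
      \<le> norm ((x + \<eta> *\<^sub>R z) - (y + \<eta> *\<^sub>R z)) / sqrt (1 + \<eta>^2)"
    using assms by (intro norm_sgn_diff_le norm_add_scaleR_ge) (auto simp: add_pos_nonneg)
  then show ?thesis
    using assms(4,5) by (simp add: hjmr_step_pos hjmr_rate_def)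
qed

lemma hjmr_step_contract_near:
  fixes x w z :: "real^'d"
  assumes "norm x = 1" "norm w = 1" "norm z = 1" "norm (x - w) < \<bar>x \<bullet> z\<bar>" "\<eta> \<ge> 0"
  shows "norm (hjmr_step \<eta> z x - hjmr_step \<eta> z w) \<le> hjmr_rate \<eta> * norm (x - w)"
proof -
  have "\<bar>x \<bullet> z - w \<bullet> z\<bar> \<le> norm (x - w)"
    using Cauchy_Schwarz_ineq2[of "x - w" z] assms(3) by (simp add: inner_diff_left)
  then have close: "\<bar>x \<bullet> z - w \<bullet> z\<bar> < \<bar>x \<bullet> z\<bar>" using assms(4) by linarith
  show ?thesis
  proof (cases "x \<bullet> z > 0")
    case True
    with close have "w \<bullet> z > 0" by linarith
    with True assms show ?thesis by (intro hjmr_step_contract) auto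
  next
    case False
    with close have "(- x) \<bullet> z > 0" "(- w) \<bullet> z > 0" by auto
    with assms have "norm (hjmr_step \<eta> z (- x) - hjmr_step \<eta> z (- w)) \<le> hjmr_rate \<eta> * norm (- x - - w)"
      by (intro hjmr_step_contract) auto
    then show ?thesis by (simp add: hjmr_step_uminus norm_minus_commute)
  qed
qed

definition antipodal_dist :: "'a::real_normed_vector \<Rightarrow> 'a \<Rightarrow> real" where
  "antipodal_dist x y = min (norm (x - y)) (norm (x + y))"

lemma antipodal_dist_nonneg: "0 \<le> antipodal_dist x y"
  by (simp add: antipodal_dist_def)

lemma antipodal_dist_hjmr_step_le:
  fixes x y z :: "real^'d"
  assumes "norm x = 1" "norm y = 1" "norm z = 1" "antipodal_dist x y < \<bar>x \<bullet> z\<bar>" "\<eta> \<ge> 0"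
  shows "antipodal_dist (hjmr_step \<eta> z x) (hjmr_step \<eta> z y) \<le> hjmr_rate \<eta> * antipodal_dist x y"
proof (cases "norm (x - y) \<le> norm (x + y)")
  case True
  then have "antipodal_dist x y = norm (x - y)" by (simp add: antipodal_dist_def)
  moreover have "norm (hjmr_step \<eta> z x - hjmr_step \<eta> z y) \<le> hjmr_rate \<eta> * norm (x - y)"
    using assms \<open>antipodal_dist x y = norm (x - y)\<close> by (intro hjmr_step_contract_near) auto
  ultimately show ?thesis by (simp add: antipodal_dist_def)
next
  case False
  then have "antipodal_dist x y = norm (x - - y)" by (simp add: antipodal_dist_def)
  moreover have "norm (hjmr_step \<eta> z x - hjmr_step \<eta> z (- y)) \<le> hjmr_rate \<eta> * norm (x - - y)"
    using assms \<open>antipodal_dist x y = norm (x - - y)\<close> by (intro hjmr_step_contract_near) auto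
  ultimately show ?thesis by (simp add: antipodal_dist_def hjmr_step_uminus)
qed

definition polar_defect :: "'n::finite \<Rightarrow> ('a::real_normed_vector)^'n \<Rightarrow> real" where
  "polar_defect i0 X = (\<Sum>j\<in>UNIV. antipodal_dist (X $ i0) (X $ j))"

lemma polar_defect_nonneg: "0 \<le> polar_defect i0 X"
  unfolding polar_defect_def by (intro sum_nonneg antipodal_dist_nonneg)

lemma antipodal_dist_le_polar_defect: "antipodal_dist (X $ i0) (X $ j) \<le> polar_defect i0 X"
  unfolding polar_defect_def by (rule member_le_sum) (auto simp: antipodal_dist_nonneg)

lemma polar_defect_hjmr_step_le:
  fixes X :: "real^'d^'n::finite"
  assumes "\<And>i. norm (X $ i) = 1" "norm z = 1" "polar_defect i0 X < \<bar>X $ i0 \<bullet> z\<bar>" "\<eta> \<ge> 0"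
  shows "polar_defect i0 (\<chi> i. hjmr_step \<eta> z (X $ i)) \<le> hjmr_rate \<eta> * polar_defect i0 X"
  unfolding polar_defect_def sum_distrib_left
proof (intro sum_mono)
  fix j
  show "antipodal_dist ((\<chi> i. hjmr_step \<eta> z (X $ i)) $ i0) ((\<chi> i. hjmr_step \<eta> z (X $ i)) $ j)
      \<le> hjmr_rate \<eta> * antipodal_dist (X $ i0) (X $ j)"
    using antipodal_dist_le_polar_defect[of X i0 j] assms
    by (simp add: antipodal_dist_hjmr_step_le)
qed

lemma infdist_polarized_le_polar_defect:
  fixes X :: "real^'d^'n::finite"
  assumes "\<And>i. norm (X $ i) = 1"
  shows "infdist X polarized \<le> polar_defect i0 X"
proof -
  define \<sigma> where "\<sigma> j = (if norm (X $ i0 - X $ j) \<le> norm (X $ i0 + X $ j) then 1 else - 1 :: real)" for j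
  define Y where "Y = (\<chi> j. \<sigma> j *\<^sub>R X $ i0)"
  have "Y \<in> polarized"
    unfolding polarized_def Y_def using assms[of i0]
    by (intro CollectI exI[of _ "X $ i0"] exI[of _ \<sigma>]) (simp add: \<sigma>_def)
  then have "infdist X polarized \<le> dist X Y" by (rule infdist_le)
  also have "\<dots> = L2_set (\<lambda>j. norm (X $ j - Y $ j)) UNIV" by (simp add: dist_norm norm_vec_def)
  also have "\<dots> \<le> (\<Sum>j\<in>UNIV. norm (X $ j - Y $ j))" by (rule L2_set_le_sum) simp
  also have "\<dots> = polar_defect i0 X"
    unfolding polar_defect_def Y_def antipodal_dist_def \<sigma>_def
    by (intro sum.cong) (auto simp: norm_minus_commute add.commute)
  finally show ?thesis .
qed

lemma norm_hjmr_traj: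
  assumes "\<And>i. norm (X0 $ i) = 1" "\<eta> \<ge> 0"
  shows "norm (hjmr_traj \<eta> X0 f t $ i) = 1"
proof (induction t arbitrary: i)
  case (Suc t)
  then have "hjmr_traj \<eta> X0 f t $ i \<noteq> 0" by (metis norm_zero zero_neq_one)
  with assms show ?case by (simp add: norm_hjmr_step)
qed (use assms in simp)

lemma hjmr_traj_add:
  "hjmr_traj \<eta> X0 f (s + t) = hjmr_traj \<eta> (hjmr_traj \<eta> X0 f s) (\<lambda>i. f (s + i)) t"
  by (induction t) auto

lemma hjmr_step_inner_ge:
  fixes x p :: "real^'d"
  assumes "norm x = 1" "norm p = 1" "x \<bullet> p \<noteq> 0" "\<eta> > 0"
  shows "\<eta> / (1 + \<eta>) \<le> \<bar>hjmr_step \<eta> p x \<bullet> p\<bar>"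
proof -
  define v where "v = x + (\<eta> * sgn (x \<bullet> p)) *\<^sub>R p"
  have "norm v \<le> norm x + norm ((\<eta> * sgn (x \<bullet> p)) *\<^sub>R p)"
    unfolding v_def by (rule norm_triangle_ineq)
  then have v_le: "norm v \<le> 1 + \<eta>" using assms by (simp add: abs_mult)
  have v_ge: "1 \<le> norm v"
    using norm_hjmr_step_arg_ge[of \<eta> x p] assms by (simp add: v_def)
  have "v \<bullet> p = x \<bullet> p + \<eta> * sgn (x \<bullet> p)"
    using assms(2) by (simp add: v_def inner_add_left dot_square_norm)
  then have "\<bar>v \<bullet> p\<bar> = \<bar>x \<bullet> p\<bar> + \<eta>"
    using assms(3,4) by (auto simp: sgn_if)
  moreover have "hjmr_step \<eta> p x = sgn v" by (simp add: hjmr_step_eq_sgn v_def)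
  ultimately have "\<bar>hjmr_step \<eta> p x \<bullet> p\<bar> = (\<bar>x \<bullet> p\<bar> + \<eta>) / norm v"
    by (simp add: sgn_div_norm abs_mult divide_inverse_commute)
  also have "\<dots> \<ge> \<eta> / (1 + \<eta>)"
    using v_le v_ge assms(4) by (intro frac_le) auto
  finally show ?thesis .
qed

lemma hjmr_step_toward:
  fixes u p z :: "real^'d"
  assumes "norm u = 1" "norm p = 1" "norm z = 1" "norm (z - p) < u \<bullet> p" "\<eta> \<ge> 0"
  shows "norm (hjmr_step \<eta> z u - p) \<le> hjmr_rate \<eta> * norm (u - p) + norm (z - p)"
proof -
  have "\<bar>u \<bullet> (z - p)\<bar> \<le> norm (z - p)"
    using Cauchy_Schwarz_ineq2[of u "z - p"] assms(1) by simp
  then have uz: "u \<bullet> z > 0" using assms(4) by (simp add: inner_diff_right)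
  have "u \<bullet> p \<le> 1" using norm_cauchy_schwarz[of u p] assms(1,2) by simp
  moreover have "\<bar>p \<bullet> (z - p)\<bar> \<le> norm (z - p)"
    using Cauchy_Schwarz_ineq2[of p "z - p"] assms(2) by simp
  ultimately have pz: "p \<bullet> z > 0"
    using assms(2,4) by (simp add: inner_diff_right dot_square_norm)
  have "sgn (p + \<eta> *\<^sub>R p) = sgn ((1 + \<eta>) *\<^sub>R p)" by (simp add: algebra_simps)
  then have p_eq: "p = sgn (p + \<eta> *\<^sub>R p)"
    using assms(2,5) by (simp add: sgn_scaleR sgn_div_norm)
  have "norm (hjmr_step \<eta> z p - p) \<le> norm ((p + \<eta> *\<^sub>R z) - (p + \<eta> *\<^sub>R p)) / sqrt (1 + \<eta>^2)"
    unfolding hjmr_step_pos[OF pz]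
    by (subst (2) p_eq, intro norm_sgn_diff_le norm_add_scaleR_ge)
      (use assms pz in \<open>auto simp: dot_square_norm add_pos_nonneg\<close>)
  also have "\<dots> = \<eta> / sqrt (1 + \<eta>^2) * norm (z - p)"
    using assms(5) by (simp flip: scaleR_diff_right)
  also have "\<dots> \<le> norm (z - p)"
  proof -
    have "\<eta> \<le> sqrt (1 + \<eta>^2)" by (rule real_le_rsqrt) simp
    then have "\<eta> / sqrt (1 + \<eta>^2) \<le> 1" by (simp add: add_pos_nonneg)
    with assms(5) show ?thesis by (intro mult_left_le_one_le) auto
  qed
  finally have "norm (hjmr_step \<eta> z p - p) \<le> norm (z - p)" .
  moreover have "norm (hjmr_step \<eta> z u - hjmr_step \<eta> z p) \<le> hjmr_rate \<eta> * norm (u - p)"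
    using assms uz pz by (intro hjmr_step_contract) auto
  ultimately show ?thesis by (intro norm_diff_triangle_le)
qed

lemma inner_unit_eq:
  fixes u p :: "'a::real_inner"
  assumes "norm u = 1" "norm p = 1"
  shows "u \<bullet> p = 1 - norm (u - p)^2 / 2"
proof -
  have "u \<bullet> u = 1" "p \<bullet> p = 1" using assms by (simp_all add: dot_square_norm)
  then show ?thesis
    by (simp add: power2_norm_eq_inner inner_diff_left inner_diff_right inner_commute field_simps)
qed

text \<open>The distance to \<open>p\<close> stays below a convex combination of its initial value and
  \<open>\<delta> / (1 - hjmr_rate \<eta>)\<close>, which keeps the agent in the hemisphere around \<open>p\<close>.\<close>
lemma hjmr_iterate_toward:
  fixes u z :: "nat \<Rightarrow> real^'d"
  assumes "\<eta> > 0" "norm p = 1"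
    and z: "\<And>i. i < K \<Longrightarrow> norm (z i) = 1 \<and> norm (z i - p) < \<delta>"
    and "0 \<le> \<delta>" "\<delta> \<le> 1/2" "\<delta> / (1 - hjmr_rate \<eta>) \<le> 1"
    and "norm (u 0) = 1" "\<delta> \<le> u 0 \<bullet> p"
    and u: "\<And>i. i < K \<Longrightarrow> u (Suc i) = hjmr_step \<eta> (z i) (u i)"
  shows "norm (u K - p) \<le> 2 * hjmr_rate \<eta> ^ K + \<delta> / (1 - hjmr_rate \<eta>)"
proof -
  define q where "q = hjmr_rate \<eta>"
  define c where "c = \<delta> / (1 - q)"
  define e where "e k = norm (u k - p)" for k
  have q: "0 < q" "q < 1" using hjmr_rate_pos hjmr_rate_less_1[OF assms(1)] by (auto simp: q_def)
  then have \<delta>_eq: "\<delta> = (1 - q) * c" by (simp add: c_def)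
  have c: "0 \<le> c" "c \<le> 1" using assms(4,6) q by (simp_all add: c_def q_def)
  have "e 0 \<le> norm (u 0) + norm p" unfolding e_def by (rule norm_triangle_ineq4)
  then have e0: "e 0 \<le> 2" using assms by simp
  have inv: "norm (u k) = 1 \<and> e k \<le> q^k * e 0 + (1 - q^k) * c" if "k \<le> K" for k
    using that
  proof (induction k)
    case (Suc k)
    then have k: "k < K" and unit: "norm (u k) = 1" and ek: "e k \<le> q^k * e 0 + (1 - q^k) * c"
      by auto
    have "e k \<le> max (e 0) c"
      using ek q by (intro order.trans[OF ek] convex_bound_le) (auto simp: power_le_one)
    then have "\<delta> \<le> u k \<bullet> p"
    proof (cases "e k \<le> e 0")
      case True
      then have "e k^2 \<le> e 0^2" by (simp add: e_def power_mono)
      then show ?thesis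
        using inner_unit_eq[OF unit assms(2)] inner_unit_eq[OF assms(7,2)] assms(8)
        unfolding e_def by linarith
    next
      case False
      with \<open>e k \<le> max (e 0) c\<close> c have "e k^2 \<le> 1"
        by (simp add: e_def power_le_one)
      then show ?thesis using inner_unit_eq[OF unit assms(2)] assms(5) by (simp add: e_def)
    qed
    with z[OF k] have "e (Suc k) \<le> q * e k + norm (z k - p)"
      unfolding e_def u[OF k] q_def using unit assms(1,2)
      by (intro hjmr_step_toward) auto
    also have "\<dots> \<le> q * (q^k * e 0 + (1 - q^k) * c) + (1 - q) * c"
      using ek z[OF k] q \<delta>_eq by (intro add_mono mult_left_mono) auto
    also have "\<dots> = q^Suc k * e 0 + (1 - q^Suc k) * c" by (simp add: algebra_simps)
    finally show ?case
      using unit assms(1) by (auto simp: u[OF k] intro!: norm_hjmr_step)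
  qed (simp add: assms(7))
  have "e K \<le> q^K * e 0 + (1 - q^K) * c" using inv by simp
  also have "\<dots> \<le> q^K * 2 + c"
    using e0 q c by (intro add_mono mult_left_mono mult_left_le_one_le) (auto simp: power_le_one)
  finally show ?thesis by (simp add: e_def q_def c_def mult.commute)
qed

lemma antipodal_dist_sign_le:
  fixes x y :: "'a::real_normed_vector"
  assumes "\<bar>s\<bar> = 1" "\<bar>t\<bar> = 1"
  shows "antipodal_dist (s *\<^sub>R x) (t *\<^sub>R y) \<le> norm (x - y)"
proof -
  have "s = 1 \<or> s = - 1" "t = 1 \<or> t = - 1" using assms by auto
  then show ?thesis
    unfolding antipodal_dist_def
    by (auto simp: norm_minus_commute algebra_simps simp flip: scaleR_diff_right)
qed

lemma hjmr_step_sign_scaleR: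
  "\<bar>s\<bar> = 1 \<Longrightarrow> hjmr_step \<eta> z (s *\<^sub>R x) = s *\<^sub>R hjmr_step \<eta> z x"
  by (cases "s = 1") (auto simp: abs_if hjmr_step_uminus split: if_splits)

text \<open>The first direction \<open>p\<close> pushes every agent a fixed amount into one of the two hemispheres
  around \<open>\<plusminus>p\<close>; after flipping signs accordingly, every agent follows an orbit to which
  the previous lemma applies.\<close>
lemma polar_defect_hjmr_traj_reset:
  fixes X :: "real^'d^'n::finite" and f :: "nat \<Rightarrow> real^'d"
  assumes "\<eta> > 0" "\<And>i. norm (X $ i) = 1" "norm (f 0) = 1" "\<And>j. X $ j \<bullet> f 0 \<noteq> 0"
    and near: "\<And>i. 0 < i \<Longrightarrow> i \<le> K \<Longrightarrow> norm (f i) = 1 \<and> norm (f i - f 0) < \<delta>"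
    and "0 \<le> \<delta>" "\<delta> \<le> 1/2" "\<delta> / (1 - hjmr_rate \<eta>) \<le> 1" "\<delta> \<le> \<eta> / (1 + \<eta>)"
  shows "polar_defect i0 (hjmr_traj \<eta> X f (Suc K))
    \<le> 2 * CARD('n) * (2 * hjmr_rate \<eta> ^ K + \<delta> / (1 - hjmr_rate \<eta>))"
proof -
  define p where "p = f 0"
  define Y where "Y t = hjmr_traj \<eta> X f t" for t
  define B where "B = 2 * hjmr_rate \<eta> ^ K + \<delta> / (1 - hjmr_rate \<eta>)"
  define \<sigma> where "\<sigma> j = sgn (Y 1 $ j \<bullet> p)" for j
  define u where "u j k = \<sigma> j *\<^sub>R Y (Suc k) $ j" for j k
  have Y_unit: "norm (Y t $ j) = 1" for t j
    unfolding Y_def using assms(1,2) by (simp add: norm_hjmr_traj)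
  have first: "\<eta> / (1 + \<eta>) \<le> \<bar>Y 1 $ j \<bullet> p\<bar>" for j
    using hjmr_step_inner_ge[OF assms(2) assms(3) assms(4) assms(1)] by (simp add: Y_def p_def)
  moreover have "0 < \<eta> / (1 + \<eta>)" using assms(1) by simp
  ultimately have \<sigma>: "\<bar>\<sigma> j\<bar> = 1" for j
    unfolding \<sigma>_def abs_sgn_eq by (metis abs_zero not_less)
  have u_near: "norm (u j K - p) \<le> B" for j
    unfolding B_def
  proof (rule hjmr_iterate_toward[where z = "\<lambda>i. f (Suc i)"])
    show "norm (u j 0) = 1" using \<sigma> Y_unit by (simp add: u_def)
    have "u j 0 \<bullet> p = \<bar>Y 1 $ j \<bullet> p\<bar>" by (simp add: u_def \<sigma>_def abs_sgn)
    then show "\<delta> \<le> u j 0 \<bullet> p" using first[of j] assms(9) by linarith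
    show "u j (Suc i) = hjmr_step \<eta> (f (Suc i)) (u j i)" for i
      by (simp add: u_def Y_def hjmr_step_sign_scaleR[OF \<sigma>])
  qed (use assms near in \<open>auto simp: p_def\<close>)
  have "\<sigma> j * \<sigma> j = 1" for j
    using \<sigma>[of j] by (metis abs_mult_self_eq mult_1_left)
  then have "polar_defect i0 (Y (Suc K)) = (\<Sum>j\<in>UNIV. antipodal_dist (\<sigma> i0 *\<^sub>R u i0 K) (\<sigma> j *\<^sub>R u j K))"
    by (simp add: polar_defect_def u_def)
  also have "\<dots> \<le> (\<Sum>j\<in>(UNIV :: 'n set). 2 * B)"
  proof (intro sum_mono)
    fix j
    have "antipodal_dist (\<sigma> i0 *\<^sub>R u i0 K) (\<sigma> j *\<^sub>R u j K) \<le> norm (u i0 K - u j K)"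
      by (rule antipodal_dist_sign_le[OF \<sigma> \<sigma>])
    also have "\<dots> \<le> 2 * B"
      using norm_diff_triangle_le[OF u_near[of i0] u_near[of j, unfolded norm_minus_commute]] by simp
    finally show "antipodal_dist (\<sigma> i0 *\<^sub>R u i0 K) (\<sigma> j *\<^sub>R u j K) \<le> 2 * B" .
  qed
  also have "\<dots> = 2 * CARD('n) * B" by simp
  finally show ?thesis by (simp only: Y_def B_def)
qed

section \<open>Bands and caps on the sphere\<close>

definition sphere_band :: "'a::real_inner \<Rightarrow> real \<Rightarrow> 'a set" where
  "sphere_band c a = {z \<in> sphere 0 1. \<bar>c \<bullet> z\<bar> \<le> a}"

definition sphere_cap :: "'a::real_normed_vector \<Rightarrow> real \<Rightarrow> 'a set" where
  "sphere_cap p \<delta> = sphere 0 1 \<inter> ball p \<delta>"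

lemma sphere_band_borel [measurable]:
  fixes c :: "'a::euclidean_space"
  shows "sphere_band c a \<in> sets borel"
proof -
  have "closed {z. \<bar>c \<bullet> z\<bar> \<le> a}" by (intro closed_Collect_le continuous_intros)
  then have "closed (sphere 0 1 \<inter> {z. \<bar>c \<bullet> z\<bar> \<le> a})" by (simp add: closed_Int)
  moreover have "sphere_band c a = sphere 0 1 \<inter> {z. \<bar>c \<bullet> z\<bar> \<le> a}"
    by (auto simp: sphere_band_def)
  ultimately show ?thesis by simp
qed

lemma sphere_cap_borel [measurable]:
  fixes p :: "'a::euclidean_space"
  shows "sphere_cap p \<delta> \<in> sets borel"
  unfolding sphere_cap_def by (intro sets.Int borel_closed borel_open) auto

definition unit_cone :: "'a::real_vector set \<Rightarrow> 'a set" where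
  "unit_cone A = {r *\<^sub>R x | r x. x \<in> A \<and> 0 < r \<and> r \<le> 1}"

lemma sphere_mu_eq_unit_cone:
  fixes A :: "(real^'d) set"
  shows "sphere_mu A = measure lebesgue (unit_cone A) / measure lebesgue (ball (0::real^'d) 1)"
  by (simp only: sphere_mu_def unit_cone_def)

lemma measure_disjoint_translates_le:
  fixes S T :: "'a::euclidean_space set" and v :: "nat \<Rightarrow> 'a"
  assumes S: "S \<in> lmeasurable" and T: "T \<in> lmeasurable"
    and disj: "disjoint_family_on (\<lambda>k. (+) (v k) ` S) {..<N}"
    and sub: "\<And>k. k < N \<Longrightarrow> (+) (v k) ` S \<subseteq> T"
  shows "real N * measure lebesgue S \<le> measure lebesgue T"
proof -
  have V: "(+) (v k) ` S \<in> lmeasurable" for k using S by (rule measurable_translation)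
  have "real N * measure lebesgue S = (\<Sum>k<N. measure lebesgue ((+) (v k) ` S))"
    by (simp add: measure_translation)
  also have "\<dots> = measure lebesgue (\<Union>k<N. (+) (v k) ` S)"
    using fmeasurableD[OF V] fmeasurableD2[OF V] disj
    by (intro measure_finite_Union[symmetric]) (auto simp: infinity_ennreal_def)
  also have "\<dots> \<le> measure lebesgue T"
    using V sub T by (intro measure_mono_fmeasurable) auto
  finally show ?thesis .
qed

text \<open>Packing argument: about \<open>1 / (6 a)\<close> disjoint translates of the slab fit into the ball of
  radius \<open>2\<close>.\<close>
lemma measure_slab_le:
  fixes c :: "'a::euclidean_space"
  assumes "norm c = 1" "0 \<le> a"
  shows "measure lebesgue {z \<in> cball 0 1. \<bar>c \<bullet> z\<bar> \<le> a} \<le> 6 * measure lebesgue (cball (0::'a) 2) * a"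
proof -
  define S where "S = {z \<in> cball (0::'a) 1. \<bar>c \<bullet> z\<bar> \<le> a}"
  define W where "W = measure lebesgue (cball (0::'a) 2)"
  have "closed {z. \<bar>c \<bullet> z\<bar> \<le> a}" by (intro closed_Collect_le continuous_intros)
  moreover have "S = cball 0 1 \<inter> {z. \<bar>c \<bullet> z\<bar> \<le> a}" by (auto simp: S_def)
  ultimately have "closed S" by (simp add: closed_Int)
  then have S: "S \<in> lmeasurable"
    by (intro bounded_set_imp_lmeasurable bounded_subset[OF bounded_cball[of 0 1]]) (auto simp: S_def)
  have S_le_W: "measure lebesgue S \<le> W"
    unfolding W_def using S by (intro measure_mono_fmeasurable lmeasurable_cball) (auto simp: S_def)
  consider "a = 0" | "1/6 \<le> a" | "0 < a" "a < 1/6" using assms(2) by linarith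
  then have "measure lebesgue S \<le> 6 * W * a"
  proof cases
    case 1
    have "S \<subseteq> {z. c \<bullet> z = 0}" by (auto simp: S_def 1)
    moreover have "negligible {z. c \<bullet> z = 0}"
      using assms(1) by (intro negligible_hyperplane) auto
    ultimately have "negligible S" by (rule negligible_subset[rotated])
    then show ?thesis by (simp add: negligible_imp_measure0 1)
  next
    case 2
    then have "W * 1 \<le> W * (6 * a)" by (intro mult_left_mono) (auto simp: W_def)
    then show ?thesis using S_le_W by simp
  next
    case 3
    define N where "N = nat \<lfloor>1 / (3 * a)\<rfloor>"
    have N_le: "real N \<le> 1 / (3 * a)" and N_gt: "1 / (3 * a) - 1 < real N"
      using 3 by (auto simp: N_def)
    have "1 < 1 / (6 * a)" "1 / (3 * a) = 2 * (1 / (6 * a))" using 3 by (simp_all add: field_simps)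
    then have N_ge: "1 / (6 * a) \<le> real N" using N_gt by linarith
    have "3 * a * real N \<le> 3 * a * (1 / (3 * a))" using N_le 3 by (intro mult_left_mono) auto
    then have N_le': "3 * a * real N \<le> 1" using 3 by simp
    define V where "V k = (+) ((3 * a * real k) *\<^sub>R c) ` S" for k
    have V_inner: "\<bar>c \<bullet> v - 3 * a * real k\<bar> \<le> a" if "v \<in> V k" for v k
    proof -
      from that obtain u where "u \<in> S" "v = (3 * a * real k) *\<^sub>R c + u" by (auto simp: V_def)
      then show ?thesis using assms(1) by (simp add: S_def inner_add_right dot_square_norm)
    qed
    have "disjoint_family_on V {..<N}"
      unfolding disjoint_family_on_def
    proof (intro ballI impI)
      fix k l :: nat assume "k \<noteq> l"
      then have "1 \<le> \<bar>real k - real l\<bar>"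
        by (cases k l rule: linorder_cases) (auto simp: nat_less_real_le)
      then have "3 * a \<le> \<bar>3 * a * real k - 3 * a * real l\<bar>"
        using 3 by (simp add: abs_mult flip: right_diff_distrib)
      show "V k \<inter> V l = {}"
      proof (intro equals0I)
        fix v assume "v \<in> V k \<inter> V l"
        then have "\<bar>c \<bullet> v - 3 * a * real k\<bar> \<le> a" "\<bar>c \<bullet> v - 3 * a * real l\<bar> \<le> a"
          using V_inner by auto
        with \<open>3 * a \<le> \<bar>3 * a * real k - 3 * a * real l\<bar>\<close> 3 show False by arith
      qed
    qed
    moreover have "V k \<subseteq> cball 0 2" if "k < N" for k
    proof
      fix v assume "v \<in> V k"
      then obtain u where u: "u \<in> S" "v = (3 * a * real k) *\<^sub>R c + u" by (auto simp: V_def)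
      have "norm v \<le> 3 * a * real k + 1"
        using norm_triangle_ineq[of "(3 * a * real k) *\<^sub>R c" u] u 3 assms(1) by (auto simp: S_def)
      also have "3 * a * real k \<le> 3 * a * real N" using \<open>k < N\<close> 3 by (intro mult_left_mono) auto
      finally show "v \<in> cball 0 2" using N_le' by simp
    qed
    ultimately have "real N * measure lebesgue S \<le> W"
      unfolding W_def V_def by (intro measure_disjoint_translates_le S lmeasurable_cball)
    moreover have "1 / (6 * a) * measure lebesgue S \<le> real N * measure lebesgue S"
      using N_ge by (intro mult_right_mono) auto
    ultimately have "measure lebesgue S / (6 * a) \<le> W" by simp
    then show ?thesis using 3 by (simp add: divide_le_eq mult.commute mult.left_commute)
  qed
  then show ?thesis by (simp add: S_def W_def)
qed

lemma sphere_mu_band_le: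
  fixes c :: "real^'d"
  assumes "norm c = 1" "0 \<le> a"
  shows "sphere_mu (sphere_band c a)
    \<le> 6 * measure lebesgue (cball (0::real^'d) 2) / measure lebesgue (ball (0::real^'d) 1) * a"
proof -
  define S where "S = {z \<in> cball (0::real^'d) 1. \<bar>c \<bullet> z\<bar> \<le> a}"
  have "unit_cone (sphere_band c a) \<subseteq> S"
  proof
    fix z assume "z \<in> unit_cone (sphere_band c a)"
    then obtain r x where z: "z = r *\<^sub>R x" and x: "x \<in> sphere_band c a" and r: "0 < r" "r \<le> 1"
      by (auto simp: unit_cone_def)
    have "\<bar>c \<bullet> z\<bar> = r * \<bar>c \<bullet> x\<bar>" using r by (simp add: z abs_mult)
    also have "\<dots> \<le> 1 * a" using x r assms(2) by (intro mult_mono) (auto simp: sphere_band_def)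
    finally show "z \<in> S" using x r by (auto simp: z S_def sphere_band_def)
  qed
  moreover have "closed {z. \<bar>c \<bullet> z\<bar> \<le> a}" by (intro closed_Collect_le continuous_intros)
  then have "S \<in> lmeasurable"
    by (intro bounded_set_imp_lmeasurable bounded_subset[OF bounded_cball[of 0 1]])
      (auto simp: S_def Collect_conj_eq[of "\<lambda>z. z \<in> cball 0 1"] closed_Int)
  ultimately have "measure lebesgue (unit_cone (sphere_band c a)) \<le> measure lebesgue S"
    by (cases "unit_cone (sphere_band c a) \<in> sets lebesgue")
      (auto intro: measure_mono_fmeasurable simp: measure_notin_sets)
  also have "\<dots> \<le> 6 * measure lebesgue (cball (0::real^'d) 2) * a"
    unfolding S_def using assms by (rule measure_slab_le)
  finally show ?thesis
    unfolding sphere_mu_eq_unit_cone by (simp add: divide_right_mono)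
qed

lemma unit_cone_sphere_cap:
  fixes p :: "real^'d"
  shows "unit_cone (sphere_cap p \<delta>) = {z. z \<noteq> 0 \<and> norm z \<le> 1 \<and> sgn z \<in> ball p \<delta>}"
proof (intro set_eqI iffI)
  fix z assume "z \<in> unit_cone (sphere_cap p \<delta>)"
  then obtain r x where "z = r *\<^sub>R x" "x \<in> sphere_cap p \<delta>" "0 < r" "r \<le> 1"
    by (auto simp: unit_cone_def)
  then show "z \<in> {z. z \<noteq> 0 \<and> norm z \<le> 1 \<and> sgn z \<in> ball p \<delta>}"
    by (auto simp: sphere_cap_def sgn_scaleR sgn_div_norm)
next
  fix z assume "z \<in> {z. z \<noteq> 0 \<and> norm z \<le> 1 \<and> sgn z \<in> ball p \<delta>}"
  then have "z = norm z *\<^sub>R sgn z" "sgn z \<in> sphere_cap p \<delta>" "0 < norm z" "norm z \<le> 1"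
    by (auto simp: sphere_cap_def norm_sgn sgn_div_norm)
  then show "z \<in> unit_cone (sphere_cap p \<delta>)" unfolding unit_cone_def by blast
qed

lemma sphere_mu_cap_ge:
  fixes p :: "real^'d"
  assumes "norm p = 1" "0 < \<delta>" "\<delta> \<le> 1"
  shows "measure lebesgue (ball (0::real^'d) (\<delta>/4)) / measure lebesgue (ball (0::real^'d) 1)
    \<le> sphere_mu (sphere_cap p \<delta>)"
proof -
  have "ball ((1/2) *\<^sub>R p) (\<delta>/4) \<subseteq> unit_cone (sphere_cap p \<delta>)"
  proof
    fix z assume "z \<in> ball ((1/2) *\<^sub>R p) (\<delta>/4)"
    then have close: "norm (z - (1/2) *\<^sub>R p) < \<delta>/4" by (simp add: dist_norm norm_minus_commute)
    have half: "norm ((1/2) *\<^sub>R p) = 1/2" using assms(1) by simp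
    have "norm z \<le> 1" "1/4 \<le> norm z"
      using norm_triangle_sub[of z "(1/2) *\<^sub>R p"] norm_triangle_sub[of "(1/2) *\<^sub>R p" z]
        close half assms(3) by (auto simp: norm_minus_commute)
    moreover have "norm (sgn z - sgn ((1/2) *\<^sub>R p)) \<le> norm (z - (1/2) *\<^sub>R p) / (1/4)"
      using \<open>1/4 \<le> norm z\<close> half by (intro norm_sgn_diff_le) auto
    moreover have "sgn ((1/2) *\<^sub>R p) = p" using assms(1) by (simp add: sgn_scaleR sgn_div_norm)
    ultimately show "z \<in> unit_cone (sphere_cap p \<delta>)"
      using close by (auto simp: unit_cone_sphere_cap dist_norm norm_minus_commute)
  qed
  moreover have "unit_cone (sphere_cap p \<delta>) \<in> lmeasurable"
    unfolding unit_cone_sphere_cap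
    by (intro bounded_set_imp_lmeasurable bounded_subset[OF bounded_cball[of 0 1]]) auto
  ultimately have "measure lebesgue (ball ((1/2) *\<^sub>R p) (\<delta>/4)) \<le> measure lebesgue (unit_cone (sphere_cap p \<delta>))"
    by (intro measure_mono_fmeasurable) auto
  moreover have "measure lebesgue (ball ((1/2) *\<^sub>R p) (\<delta>/4)) = measure lebesgue (ball (0::real^'d) (\<delta>/4))"
    using measure_translation[of "(1/2) *\<^sub>R p" "ball 0 (\<delta>/4)"] by simp
  ultimately show ?thesis
    unfolding sphere_mu_eq_unit_cone by (simp add: divide_right_mono)
qed

section \<open>Conditioning on the past of an independent sequence\<close>

definition depends_on_prefix :: "nat \<Rightarrow> ((nat \<Rightarrow> 'a) \<Rightarrow> bool) \<Rightarrow> bool" where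
  "depends_on_prefix s P \<longleftrightarrow> (\<forall>f. P f = P (restrict f {..<s}))"

lemma depends_on_prefix_mono:
  assumes "depends_on_prefix s P" "s \<le> s'"
  shows "depends_on_prefix s' P"
  unfolding depends_on_prefix_def
proof
  fix f :: "nat \<Rightarrow> 'a"
  have "restrict (restrict f {..<s'}) {..<s} = restrict f {..<s}" using assms(2) by auto
  then show "P f = P (restrict f {..<s'})"
    using assms(1) unfolding depends_on_prefix_def by metis
qed

lemma (in finite_measure) AE_if_small_supersets:
  assumes "\<And>\<epsilon>. 0 < \<epsilon> \<Longrightarrow> \<exists>A\<in>sets M. {x \<in> space M. \<not> P x} \<subseteq> A \<and> measure M A \<le> \<epsilon>"
  shows "AE x in M. P x"
proof -
  have "\<forall>n. \<exists>A. A \<in> sets M \<and> {x \<in> space M. \<not> P x} \<subseteq> A \<and> measure M A \<le> 1 / Suc n"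
    using assms by (metis of_nat_0_less_iff zero_less_Suc zero_less_divide_1_iff)
  then obtain A where A: "\<And>n. A n \<in> sets M" "\<And>n. {x \<in> space M. \<not> P x} \<subseteq> A n"
    "\<And>n. measure M (A n) \<le> 1 / Suc n"
    by (auto dest!: choice)
  have bound: "measure M (\<Inter>n. A n) \<le> 1 / Suc n" for n
  proof -
    have "measure M (\<Inter>n. A n) \<le> measure M (A n)"
      using A(1) by (intro finite_measure_mono) auto
    then show ?thesis using A(3)[of n] by linarith
  qed
  have "measure M (\<Inter>n. A n) \<le> 0"
  proof (rule field_le_epsilon)
    fix e :: real assume "0 < e"
    then obtain n where "inverse (real (Suc n)) < e" using reals_Archimedean by blast
    then show "measure M (\<Inter>n. A n) \<le> 0 + e" using bound[of n] by (simp add: inverse_eq_divide)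
  qed
  then have "(\<Inter>n. A n) \<in> null_sets M"
    using A(1) by (auto simp: null_sets_def emeasure_eq_measure measure_le_0_iff)
  then show ?thesis using A(2) by (intro AE_I') auto
qed

locale indep_sequence = prob_space M for M :: "'w measure" +
  fixes N :: "'a measure" and \<xi> :: "nat \<Rightarrow> 'w \<Rightarrow> 'a"
  assumes measurable_seq [measurable]: "\<And>t. \<xi> t \<in> measurable M N"
    and indep_seq: "indep_vars (\<lambda>_. N) \<xi> UNIV"
begin

definition sample_path :: "'w \<Rightarrow> nat \<Rightarrow> 'a" where
  "sample_path \<omega> t = \<xi> t \<omega>"

abbreviation history :: "nat \<Rightarrow> (nat \<Rightarrow> 'a) measure" where
  "history s \<equiv> PiM {..<s} (\<lambda>_. N)"

definition past :: "nat \<Rightarrow> 'w \<Rightarrow> nat \<Rightarrow> 'a" where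
  "past s \<omega> = restrict (sample_path \<omega>) {..<s}"

lemma measurable_past [measurable]: "past s \<in> measurable M (history s)"
  unfolding past_def sample_path_def by measurable

lemma sample_path_nth: "sample_path \<omega> t = \<xi> t \<omega>"
  by (simp add: sample_path_def)

lemma past_sample_path: "depends_on_prefix s P \<Longrightarrow> P (past s \<omega>) = P (sample_path \<omega>)"
  unfolding depends_on_prefix_def past_def by metis

lemma pred_history_mono:
  assumes "depends_on_prefix s P" "Measurable.pred (history s) P" "s \<le> s'"
  shows "Measurable.pred (history s') P"
proof -
  have "Measurable.pred (history s') (\<lambda>h. P (restrict h {..<s}))"
    using measurable_compose[OF measurable_restrict_subset assms(2)] assms(3) by auto
  moreover have "(\<lambda>h. P (restrict h {..<s})) = P"
    using assms(1) by (auto simp: depends_on_prefix_def)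
  ultimately show ?thesis by simp
qed

lemma sets_prefix_event:
  assumes "depends_on_prefix s P" "Measurable.pred (history s) P"
  shows "{\<omega> \<in> space M. P (sample_path \<omega>)} \<in> events"
proof -
  have "{\<omega> \<in> space M. P (sample_path \<omega>)} = {\<omega> \<in> space M. P (past s \<omega>)}"
    using past_sample_path[OF assms(1)] by simp
  also have "\<dots> \<in> events" using assms(2) by measurable
  finally show ?thesis .
qed

text \<open>\<open>indep_var\<close> requires both variables to take values in the same type, so the present
  value is represented by its restriction to \<open>{s}\<close>.\<close>
lemma indep_past_present:
  "indep_var (history s) (past s) (PiM {s} (\<lambda>_. N)) (\<lambda>\<omega>. restrict (sample_path \<omega>) {s})"
proof -
  define K where "K b = (if b then {..<s} else {s})" for b
  have "indep_vars (\<lambda>b. PiM (K b) (\<lambda>_. N)) (\<lambda>b \<omega>. restrict (\<lambda>i. \<xi> i \<omega>) (K b)) UNIV"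
    by (rule indep_vars_restrict[OF indep_seq]) (auto simp: K_def disjoint_family_on_def)
  then show ?thesis
    unfolding indep_var_def past_def sample_path_def
    by (rule indep_vars_cong[THEN iffD1, rotated 3]) (auto simp: K_def split: bool.split)
qed

lemma emeasure_past_present_eq:
  assumes P: "Measurable.pred (history s) P"
    and Q: "Measurable.pred (history s \<Otimes>\<^sub>M N) (\<lambda>x. Q (fst x) (snd x))"
  shows "emeasure M {\<omega> \<in> space M. P (past s \<omega>) \<and> Q (past s \<omega>) (\<xi> s \<omega>)}
    = (\<integral>\<^sup>+h. indicator {h \<in> space (history s). P h} h * emeasure M {\<omega> \<in> space M. Q h (\<xi> s \<omega>)}
        \<partial>distr M (history s) (past s))"
proof -
  let ?G = "PiM {s} (\<lambda>_. N)" and ?g = "\<lambda>\<omega>. restrict (sample_path \<omega>) {s}"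
  define DH where "DH = distr M (history s) (past s)"
  define DG where "DG = distr M ?G ?g"
  have g [measurable]: "?g \<in> measurable M ?G" unfolding sample_path_def by measurable
  interpret DG: prob_space DG unfolding DG_def by (rule prob_space_distr) measurable
  have [measurable]: "(\<lambda>x. snd x s) \<in> measurable (history s \<Otimes>\<^sub>M ?G) N"
    by measurable
  have [measurable]: "Measurable.pred (history s \<Otimes>\<^sub>M ?G) (\<lambda>x. Q (fst x) (snd x s))"
    using measurable_compose[OF measurable_Pair[OF measurable_fst \<open>(\<lambda>x. snd x s) \<in> _\<close>] Q]
    by simp
  define S where "S = {x \<in> space (history s \<Otimes>\<^sub>M ?G). P (fst x) \<and> Q (fst x) (snd x s)}"
  have S: "S \<in> sets (history s \<Otimes>\<^sub>M ?G)" unfolding S_def using P by measurable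
  have "emeasure M {\<omega> \<in> space M. P (past s \<omega>) \<and> Q (past s \<omega>) (\<xi> s \<omega>)}
      = emeasure (distr M (history s \<Otimes>\<^sub>M ?G) (\<lambda>\<omega>. (past s \<omega>, ?g \<omega>))) S"
    using S measurable_space[OF measurable_past] measurable_space[OF g]
    by (subst emeasure_distr) (auto simp: S_def sample_path_def space_pair_measure
        intro!: arg_cong[where f = "emeasure M"])
  also have "\<dots> = emeasure (DH \<Otimes>\<^sub>M DG) S"
    using indep_past_present[of s] by (simp add: indep_var_distribution_eq DH_def DG_def)
  also have "\<dots> = (\<integral>\<^sup>+h. emeasure DG (Pair h -` S) \<partial>DH)"
    using S by (intro DG.emeasure_pair_measure_alt) (simp add: DH_def DG_def cong: sets_pair_measure_cong)
  also have "\<dots> = (\<integral>\<^sup>+h. indicator {h \<in> space (history s). P h} h * emeasure M {\<omega> \<in> space M. Q h (\<xi> s \<omega>)} \<partial>DH)"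
  proof (rule nn_integral_cong)
    fix h assume "h \<in> space DH"
    then have h: "h \<in> space (history s)" by (simp add: DH_def)
    have Qh: "{g \<in> space ?G. Q h (g s)} \<in> sets ?G"
      using measurable_Pair2[OF \<open>Measurable.pred (history s \<Otimes>\<^sub>M ?G) _\<close> h]
      by (simp add: Measurable.pred_def pred_def)
    have "emeasure DG (Pair h -` S) = indicator {h \<in> space (history s). P h} h * emeasure DG {g \<in> space ?G. Q h (g s)}"
      using h by (cases "P h") (auto simp: S_def space_pair_measure intro!: arg_cong[where f = "emeasure DG"])
    also have "emeasure DG {g \<in> space ?G. Q h (g s)} = emeasure M {\<omega> \<in> space M. Q h (\<xi> s \<omega>)}"
      unfolding DG_def using Qh measurable_space[OF g]
      by (subst emeasure_distr[OF g]) (auto simp: sample_path_def intro!: arg_cong[where f = "emeasure M"])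
    finally show "emeasure DG (Pair h -` S) = indicator {h \<in> space (history s). P h} h * emeasure M {\<omega> \<in> space M. Q h (\<xi> s \<omega>)}" .
  qed
  finally show ?thesis by (simp add: DH_def)
qed

lemma emeasure_past_event:
  assumes "Measurable.pred (history s) P"
  shows "emeasure (distr M (history s) (past s)) {h \<in> space (history s). P h}
    = emeasure M {\<omega> \<in> space M. P (past s \<omega>)}"
  using assms measurable_space[OF measurable_past]
  by (subst emeasure_distr) (auto intro!: arg_cong[where f = "emeasure M"])

lemma prob_past_present_le:
  assumes "depends_on_prefix s P" "Measurable.pred (history s) P"
    and "\<And>z. depends_on_prefix s (\<lambda>f. Q f z)"
    and "Measurable.pred (history s \<Otimes>\<^sub>M N) (\<lambda>x. Q (fst x) (snd x))"
    and "0 \<le> b" "\<And>h. h \<in> space (history s) \<Longrightarrow> P h \<Longrightarrow> prob {\<omega> \<in> space M. Q h (\<xi> s \<omega>)} \<le> b"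
  shows "prob {\<omega> \<in> space M. P (sample_path \<omega>) \<and> Q (sample_path \<omega>) (\<xi> s \<omega>)} \<le> b * prob {\<omega> \<in> space M. P (sample_path \<omega>)}"
proof -
  let ?I = "\<lambda>h. indicator {h \<in> space (history s). P h} h :: ennreal"
  have "{\<omega> \<in> space M. P (sample_path \<omega>) \<and> Q (sample_path \<omega>) (\<xi> s \<omega>)}
      = {\<omega> \<in> space M. P (past s \<omega>) \<and> Q (past s \<omega>) (\<xi> s \<omega>)}"
    using past_sample_path[OF assms(1)] past_sample_path[OF assms(3)] by simp
  then have "ennreal (prob {\<omega> \<in> space M. P (sample_path \<omega>) \<and> Q (sample_path \<omega>) (\<xi> s \<omega>)})
      = (\<integral>\<^sup>+h. ?I h * emeasure M {\<omega> \<in> space M. Q h (\<xi> s \<omega>)} \<partial>distr M (history s) (past s))"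
    using emeasure_past_present_eq[OF assms(2,4)] by (simp add: emeasure_eq_measure)
  also have "\<dots> \<le> (\<integral>\<^sup>+h. ennreal b * ?I h \<partial>distr M (history s) (past s))"
    using assms(6) by (intro nn_integral_mono) (auto simp: emeasure_eq_measure indicator_def ennreal_leI)
  also have "\<dots> = ennreal (b * prob {\<omega> \<in> space M. P (sample_path \<omega>)})"
    using assms(1,2,5) past_sample_path[OF assms(1)]
    by (simp add: nn_integral_cmult_indicator emeasure_past_event emeasure_eq_measure ennreal_mult)
  finally show ?thesis using assms(5) by (simp add: ennreal_le_iff)
qed

lemma prob_past_present_ge:
  assumes "depends_on_prefix s P" "Measurable.pred (history s) P"
    and "\<And>z. depends_on_prefix s (\<lambda>f. Q f z)"
    and "Measurable.pred (history s \<Otimes>\<^sub>M N) (\<lambda>x. Q (fst x) (snd x))"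
    and "0 \<le> b" "\<And>h. h \<in> space (history s) \<Longrightarrow> P h \<Longrightarrow> b \<le> prob {\<omega> \<in> space M. Q h (\<xi> s \<omega>)}"
  shows "b * prob {\<omega> \<in> space M. P (sample_path \<omega>)} \<le> prob {\<omega> \<in> space M. P (sample_path \<omega>) \<and> Q (sample_path \<omega>) (\<xi> s \<omega>)}"
proof -
  let ?I = "\<lambda>h. indicator {h \<in> space (history s). P h} h :: ennreal"
  have "ennreal (b * prob {\<omega> \<in> space M. P (sample_path \<omega>)}) = (\<integral>\<^sup>+h. ennreal b * ?I h \<partial>distr M (history s) (past s))"
    using assms(1,2,5) past_sample_path[OF assms(1)]
    by (simp add: nn_integral_cmult_indicator emeasure_past_event emeasure_eq_measure ennreal_mult)
  also have "\<dots> \<le> (\<integral>\<^sup>+h. ?I h * emeasure M {\<omega> \<in> space M. Q h (\<xi> s \<omega>)} \<partial>distr M (history s) (past s))"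
    using assms(6) by (intro nn_integral_mono) (auto simp: emeasure_eq_measure indicator_def ennreal_leI)
  also have "\<dots> = ennreal (prob {\<omega> \<in> space M. P (past s \<omega>) \<and> Q (past s \<omega>) (\<xi> s \<omega>)})"
    using emeasure_past_present_eq[OF assms(2,4)] by (simp add: emeasure_eq_measure)
  also have "{\<omega> \<in> space M. P (past s \<omega>) \<and> Q (past s \<omega>) (\<xi> s \<omega>)}
      = {\<omega> \<in> space M. P (sample_path \<omega>) \<and> Q (sample_path \<omega>) (\<xi> s \<omega>)}"
    using past_sample_path[OF assms(1)] past_sample_path[OF assms(3)] by simp
  finally show ?thesis by (simp add: ennreal_le_iff)
qed

end

section \<open>The random dynamics\<close>

lemma borel_measurable_hjmr_step [measurable]:
  "(\<lambda>x. hjmr_step \<eta> (fst x) (snd x)) \<in> borel_measurable (borel \<Otimes>\<^sub>M (borel :: (real^'d) measure))"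
  unfolding hjmr_step_def proj_sphere_def by measurable

lemma borel_measurable_vec_nth [measurable]:
  "(\<lambda>X::('a::real_normed_vector)^'n. X $ i) \<in> borel_measurable borel"
  by (intro borel_measurable_continuous_onI continuous_intros)

lemma borel_measurable_vec_lambda:
  fixes f :: "'a \<Rightarrow> real^'d^'n"
  assumes "\<And>i. (\<lambda>x. f x $ i) \<in> borel_measurable N"
  shows "f \<in> borel_measurable N"
proof (subst borel_measurable_euclidean_space, intro ballI)
  fix b :: "real^'d^'n" assume "b \<in> Basis"
  then obtain i u where b: "b = axis i u" and "u \<in> Basis" by (auto simp: Basis_vec_def)
  have "(\<lambda>x. f x \<bullet> b) = (\<lambda>x. (f x $ i) \<bullet> u)" by (simp add: b inner_axis)
  also have "\<dots> \<in> borel_measurable N" using assms[of i] by measurable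
  finally show "(\<lambda>x. f x \<bullet> b) \<in> borel_measurable N" .
qed

lemma borel_measurable_hjmr_traj:
  assumes "{..<t} \<subseteq> I"
  shows "(\<lambda>f. hjmr_traj \<eta> X0 f t) \<in> borel_measurable (PiM I (\<lambda>_. borel :: (real^'d) measure))"
  using assms
proof (induction t)
  case (Suc t)
  then have "{..<t} \<subseteq> I" "t \<in> I" by auto
  then have [measurable]: "(\<lambda>f. hjmr_traj \<eta> X0 f t) \<in> borel_measurable (PiM I (\<lambda>_. borel))"
    and [measurable]: "(\<lambda>f. f t) \<in> borel_measurable (PiM I (\<lambda>_. borel :: (real^'d) measure))"
    using Suc.IH by auto
  have "(\<lambda>f. hjmr_step \<eta> (f t) (hjmr_traj \<eta> X0 f t $ i)) \<in> borel_measurable (PiM I (\<lambda>_. borel))" for i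
    using measurable_compose[OF _ borel_measurable_hjmr_step, of "\<lambda>f. (f t, hjmr_traj \<eta> X0 f t $ i)"]
    by simp
  then show ?case by (intro borel_measurable_vec_lambda) simp
qed simp

lemma hjmr_traj_restrict: "t \<le> s \<Longrightarrow> hjmr_traj \<eta> X0 (restrict f {..<s}) t = hjmr_traj \<eta> X0 f t"
  by (induction t) auto

lemma sphere_borel [measurable]: "sphere (a::'a::euclidean_space) r \<in> sets borel"
  by simp

lemma borel_measurable_antipodal_dist [measurable (raw)]:
  fixes f g :: "'a \<Rightarrow> 'b::euclidean_space"
  assumes "f \<in> borel_measurable N" "g \<in> borel_measurable N"
  shows "(\<lambda>x. antipodal_dist (f x) (g x)) \<in> borel_measurable N"
  unfolding antipodal_dist_def using assms by measurable

lemma borel_measurable_polar_defect [measurable]: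
  "(polar_defect i0 :: ('a::euclidean_space)^'n::finite \<Rightarrow> real) \<in> borel_measurable borel"
  unfolding polar_defect_def by measurable

locale signed_hjmr = indep_sequence M borel \<xi>
  for M :: "'w measure" and \<xi> :: "nat \<Rightarrow> 'w \<Rightarrow> real^'d" +
  fixes \<eta> C C' :: real and X0 :: "real^'d^'n::finite" and i0 :: 'n
  assumes eta_pos: "0 < \<eta>"
    and on_sphere: "\<And>t. AE \<omega> in M. \<xi> t \<omega> \<in> sphere 0 1"
    and C_pos: "0 < C" and C'_pos: "0 < C'"
    and bounds: "\<And>t A. A \<in> sets borel \<Longrightarrow> A \<subseteq> sphere 0 1 \<Longrightarrow>
        C * sphere_mu A \<le> measure M (\<xi> t -` A \<inter> space M) \<and>
        measure M (\<xi> t -` A \<inter> space M) \<le> C' * sphere_mu A"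
    and X0_unit: "\<And>i. norm (X0 $ i) = 1"
begin

abbreviation rate :: real where
  "rate \<equiv> hjmr_rate \<eta>"

lemma rate_pos: "0 < rate" and rate_less_1: "rate < 1"
  using hjmr_rate_pos hjmr_rate_less_1[OF eta_pos] by auto

definition traj :: "nat \<Rightarrow> (nat \<Rightarrow> real^'d) \<Rightarrow> real^'d^'n" where
  "traj t f = hjmr_traj \<eta> X0 f t"

definition defect :: "nat \<Rightarrow> (nat \<Rightarrow> real^'d) \<Rightarrow> real" where
  "defect t f = polar_defect i0 (traj t f)"

text \<open>A kick at time \<open>t\<close> is a direction for which the contraction of the defect is not
  guaranteed.\<close>
definition kick :: "nat \<Rightarrow> (nat \<Rightarrow> real^'d) \<Rightarrow> bool" where
  "kick t f \<longleftrightarrow> f t \<notin> sphere 0 1 \<or> \<bar>traj t f $ i0 \<bullet> f t\<bar> \<le> defect t f"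

definition escape :: "nat \<Rightarrow> real \<Rightarrow> (nat \<Rightarrow> real^'d) \<Rightarrow> bool" where
  "escape t a f \<longleftrightarrow> (\<exists>j. defect (t + j) f \<le> rate ^ j * a \<and> kick (t + j) f)"

lemma norm_traj: "norm (traj t f $ i) = 1"
  unfolding traj_def using X0_unit eta_pos by (simp add: norm_hjmr_traj)

lemma defect_nonneg: "0 \<le> defect t f"
  by (simp add: defect_def polar_defect_nonneg)

lemma defect_Suc_le:
  assumes "\<not> kick t f"
  shows "defect (Suc t) f \<le> rate * defect t f"
proof -
  have "traj (Suc t) f = (\<chi> i. hjmr_step \<eta> (f t) (traj t f $ i))" by (simp add: traj_def)
  then show ?thesis
    unfolding defect_def using assms norm_traj eta_pos
    by (simp only:) (intro polar_defect_hjmr_step_le, auto simp: kick_def defect_def)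
qed

lemma defect_decay:
  assumes "defect t f \<le> a" "\<not> escape t a f"
  shows "defect (t + J) f \<le> rate ^ J * a"
proof (induction J)
  case (Suc J)
  with assms(2) have "\<not> kick (t + J) f" unfolding escape_def by blast
  then have "defect (t + Suc J) f \<le> rate * defect (t + J) f" by (simp add: defect_Suc_le)
  also have "\<dots> \<le> rate * (rate ^ J * a)" using Suc rate_pos by (intro mult_left_mono) auto
  finally show ?case by simp
qed (use assms in simp)

lemma defect_tendsto_zero:
  assumes "defect t f \<le> a" "\<not> escape t a f"
  shows "(\<lambda>n. defect n f) \<longlonglongrightarrow> 0"
proof -
  have "(\<lambda>J. rate ^ J * a) \<longlonglongrightarrow> 0"
    using rate_pos rate_less_1 by (intro tendsto_mult_left_zero LIMSEQ_power_zero) simp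
  then have "(\<lambda>J. defect (J + t) f) \<longlonglongrightarrow> 0"
  proof (rule tendsto_sandwich[OF _ _ tendsto_const, rotated 2])
    show "\<forall>\<^sub>F J in sequentially. 0 \<le> defect (J + t) f" by (simp add: defect_nonneg)
    have "defect (J + t) f \<le> rate ^ J * a" for J
      using defect_decay[OF assms, of J] by (simp only: add.commute)
    then show "\<forall>\<^sub>F J in sequentially. defect (J + t) f \<le> rate ^ J * a" by simp
  qed
  then show ?thesis by (rule LIMSEQ_offset)
qed

lemma traj_restrict: "t \<le> s \<Longrightarrow> traj t (restrict f {..<s}) = traj t f"
  by (simp add: traj_def hjmr_traj_restrict)

lemma defect_restrict: "t \<le> s \<Longrightarrow> defect t (restrict f {..<s}) = defect t f"
  by (simp add: defect_def traj_restrict)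

lemma depends_on_prefix_defect: "t \<le> s \<Longrightarrow> depends_on_prefix s (\<lambda>f. P (defect t f))"
  by (simp add: depends_on_prefix_def defect_def traj_restrict)

lemma measurable_traj: "t \<le> s \<Longrightarrow> traj t \<in> borel_measurable (history s)"
  unfolding traj_def by (rule borel_measurable_hjmr_traj) auto

lemma measurable_defect: "t \<le> s \<Longrightarrow> defect t \<in> borel_measurable (history s)"
  unfolding defect_def using measurable_traj by measurable

lemma borel_measurable_defect_path [measurable]: "(\<lambda>\<omega>. defect t (sample_path \<omega>)) \<in> borel_measurable M"
proof -
  have "(\<lambda>\<omega>. defect t (sample_path \<omega>)) = (\<lambda>\<omega>. defect t (past t \<omega>))"
    by (simp add: past_def defect_restrict)
  then show ?thesis using measurable_compose[OF measurable_past measurable_defect[of t t]] by simp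
qed

lemma measurable_history_nth: "t < s \<Longrightarrow> (\<lambda>f. f t) \<in> borel_measurable (history s)"
  by (rule measurable_component_singleton) simp

lemma depends_on_prefix_kick: "depends_on_prefix (Suc t) (kick t)"
  by (simp add: depends_on_prefix_def kick_def defect_def traj_restrict)

lemma pred_kick: "Measurable.pred (history (Suc t)) (kick t)"
proof -
  have [measurable]: "(\<lambda>f. traj t f $ i0) \<in> borel_measurable (history (Suc t))"
    "(\<lambda>f. defect t f) \<in> borel_measurable (history (Suc t))"
    "(\<lambda>f. f t) \<in> borel_measurable (history (Suc t))"
    using measurable_traj[of t "Suc t"] by (simp_all add: measurable_defect measurable_history_nth)
  have "(\<lambda>f. \<bar>traj t f $ i0 \<bullet> f t\<bar>) \<in> borel_measurable (history (Suc t))" by measurable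
  from borel_measurable_le[OF this \<open>(\<lambda>f. defect t f) \<in> _\<close>]
  have [measurable]: "Measurable.pred (history (Suc t)) (\<lambda>f. \<bar>traj t f $ i0 \<bullet> f t\<bar> \<le> defect t f)"
    by (simp add: pred_def)
  show ?thesis unfolding kick_def by measurable
qed

definition band_const :: real where
  "band_const = C' * (6 * measure lebesgue (cball (0::real^'d) 2) / measure lebesgue (ball (0::real^'d) 1))"

definition cap_const :: "real \<Rightarrow> real" where
  "cap_const \<delta> = C * (measure lebesgue (ball (0::real^'d) (\<delta>/4)) / measure lebesgue (ball (0::real^'d) 1))"

lemma band_const_nonneg: "0 \<le> band_const"
  using C'_pos by (simp add: band_const_def)

lemma cap_const_pos: "0 < \<delta> \<Longrightarrow> 0 < cap_const \<delta>"
  using C_pos content_ball_pos[of "\<delta>/4" "0::real^'d"] content_ball_pos[of 1 "0::real^'d"]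
  by (simp add: cap_const_def)

lemma prob_band_le:
  assumes "norm c = 1" "0 \<le> a"
  shows "prob {\<omega> \<in> space M. \<xi> s \<omega> \<notin> sphere 0 1 \<or> \<bar>c \<bullet> \<xi> s \<omega>\<bar> \<le> a} \<le> band_const * a"
proof -
  have "prob {\<omega> \<in> space M. \<xi> s \<omega> \<notin> sphere 0 1 \<or> \<bar>c \<bullet> \<xi> s \<omega>\<bar> \<le> a}
      = prob (\<xi> s -` sphere_band c a \<inter> space M)"
    using on_sphere[of s] by (intro measure_eq_AE) (auto simp: sphere_band_def)
  also have "\<dots> \<le> C' * sphere_mu (sphere_band c a)"
    using bounds[OF sphere_band_borel, of c a s] by (simp add: sphere_band_def subset_iff)
  also have "\<dots> \<le> C' * (6 * measure lebesgue (cball (0::real^'d) 2) / measure lebesgue (ball (0::real^'d) 1) * a)"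
    by (rule mult_left_mono[OF sphere_mu_band_le[OF assms]]) (use C'_pos in simp)
  also have "\<dots> = band_const * a" by (simp add: band_const_def)
  finally show ?thesis .
qed

lemma prob_cap_ge:
  assumes "norm p = 1" "0 < \<delta>" "\<delta> \<le> 1"
  shows "cap_const \<delta> \<le> prob {\<omega> \<in> space M. \<xi> s \<omega> \<in> sphere_cap p \<delta>}"
proof -
  have "cap_const \<delta> \<le> C * sphere_mu (sphere_cap p \<delta>)"
    unfolding cap_const_def by (rule mult_left_mono[OF sphere_mu_cap_ge[OF assms]]) (use C_pos in simp)
  also have "\<dots> \<le> prob (\<xi> s -` sphere_cap p \<delta> \<inter> space M)"
    using bounds[OF sphere_cap_borel, of p \<delta> s] by (simp add: sphere_cap_def)
  finally show ?thesis by (simp add: Int_def Collect_conj_eq[symmetric] conj_commute)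
qed

lemma prob_kick_le:
  assumes P: "depends_on_prefix t P" "Measurable.pred (history t) P"
    and a: "\<And>f. P f \<Longrightarrow> defect t f \<le> a" "0 \<le> a"
  shows "prob {\<omega> \<in> space M. P (sample_path \<omega>) \<and> kick t (sample_path \<omega>)}
    \<le> band_const * a * prob {\<omega> \<in> space M. P (sample_path \<omega>)}"
proof -
  define Q where "Q f z \<longleftrightarrow> z \<notin> sphere 0 1 \<or> \<bar>traj t f $ i0 \<bullet> z\<bar> \<le> defect t f" for f z
  have "kick t (sample_path \<omega>) = Q (sample_path \<omega>) (\<xi> t \<omega>)" for \<omega> by (simp add: kick_def Q_def sample_path_def)
  moreover have "prob {\<omega> \<in> space M. P (sample_path \<omega>) \<and> Q (sample_path \<omega>) (\<xi> t \<omega>)}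
      \<le> band_const * a * prob {\<omega> \<in> space M. P (sample_path \<omega>)}"
  proof (rule prob_past_present_le[OF P])
    show "depends_on_prefix t (\<lambda>f. Q f z)" for z
      unfolding Q_def by (simp add: depends_on_prefix_def defect_def traj_restrict)
    have [measurable]: "(\<lambda>x. traj t (fst x) $ i0) \<in> borel_measurable (history t \<Otimes>\<^sub>M borel)"
      "(\<lambda>x. defect t (fst x)) \<in> borel_measurable (history t \<Otimes>\<^sub>M borel)"
      using measurable_traj[of t t] measurable_defect[of t t] by measurable
    have "(\<lambda>x. \<bar>traj t (fst x) $ i0 \<bullet> snd x\<bar>) \<in> borel_measurable (history t \<Otimes>\<^sub>M borel)"
      by measurable
    from borel_measurable_le[OF this \<open>(\<lambda>x. defect t (fst x)) \<in> _\<close>]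
    have [measurable]: "Measurable.pred (history t \<Otimes>\<^sub>M borel)
        (\<lambda>x. \<bar>traj t (fst x) $ i0 \<bullet> snd x\<bar> \<le> defect t (fst x))"
      by (simp add: pred_def)
    show "Measurable.pred (history t \<Otimes>\<^sub>M borel) (\<lambda>x. Q (fst x) (snd x))"
      unfolding Q_def by measurable
    show "0 \<le> band_const * a" using band_const_nonneg a(2) by simp
    fix h assume "P h"
    have "prob {\<omega> \<in> space M. Q h (\<xi> t \<omega>)}
        \<le> prob {\<omega> \<in> space M. \<xi> t \<omega> \<notin> sphere 0 1 \<or> \<bar>traj t h $ i0 \<bullet> \<xi> t \<omega>\<bar> \<le> a}"
      using a(1)[OF \<open>P h\<close>] by (intro finite_measure_mono) (auto simp: Q_def)
    also have "\<dots> \<le> band_const * a" using norm_traj a(2) by (rule prob_band_le)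
    finally show "prob {\<omega> \<in> space M. Q h (\<xi> t \<omega>)} \<le> band_const * a" .
  qed
  ultimately show ?thesis by simp
qed

lemma escape_step_event:
  fixes j :: nat and a :: real
  assumes "depends_on_prefix t A" "Measurable.pred (history t) A"
  defines "P \<equiv> \<lambda>f. A f \<and> defect (t + j) f \<le> rate ^ j * a"
  shows "depends_on_prefix (t + j) P" "Measurable.pred (history (t + j)) P"
    and "{\<omega> \<in> space M. P (sample_path \<omega>) \<and> kick (t + j) (sample_path \<omega>)} \<in> events"
proof -
  show dep: "depends_on_prefix (t + j) P"
    using depends_on_prefix_mono[OF assms(1), of "t + j"]
    by (auto simp: P_def depends_on_prefix_def defect_restrict)
  have [measurable]: "Measurable.pred (history (t + j)) A"
    using assms(1,2) by (rule pred_history_mono) simp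
  have [measurable]: "defect (t + j) \<in> borel_measurable (history (t + j))"
    by (simp add: measurable_defect)
  show pred: "Measurable.pred (history (t + j)) P" unfolding P_def by measurable
  have "depends_on_prefix (Suc (t + j)) (\<lambda>f. P f \<and> kick (t + j) f)"
    using depends_on_prefix_mono[OF dep, of "Suc (t + j)"] depends_on_prefix_kick[of "t + j"]
    by (auto simp: depends_on_prefix_def)
  moreover have "Measurable.pred (history (Suc (t + j))) (\<lambda>f. P f \<and> kick (t + j) f)"
    using pred_history_mono[OF dep pred, of "Suc (t + j)"] pred_kick[of "t + j"] by measurable
  ultimately show "{\<omega> \<in> space M. P (sample_path \<omega>) \<and> kick (t + j) (sample_path \<omega>)} \<in> events"
    by (rule sets_prefix_event)
qed

lemma escape_event_eq:
  "{\<omega> \<in> space M. A (sample_path \<omega>) \<and> escape t a (sample_path \<omega>)}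
    = (\<Union>j. {\<omega> \<in> space M. (A (sample_path \<omega>) \<and> defect (t + j) (sample_path \<omega>) \<le> rate ^ j * a) \<and> kick (t + j) (sample_path \<omega>)})"
  by (auto simp: escape_def)

lemma sets_escape_event:
  assumes "depends_on_prefix t A" "Measurable.pred (history t) A"
  shows "{\<omega> \<in> space M. A (sample_path \<omega>) \<and> escape t a (sample_path \<omega>)} \<in> events"
  unfolding escape_event_eq using escape_step_event(3)[OF assms] by blast

text \<open>Union bound over the times at which a kick may occur; the defect bound at time \<open>t + j\<close>
  makes the kick probability geometrically small in \<open>j\<close>.\<close>
lemma prob_escape_le:
  assumes "depends_on_prefix t A" "Measurable.pred (history t) A" "0 \<le> a"
  shows "prob {\<omega> \<in> space M. A (sample_path \<omega>) \<and> escape t a (sample_path \<omega>)}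
    \<le> band_const * a / (1 - rate) * prob {\<omega> \<in> space M. A (sample_path \<omega>)}"
proof -
  define E where "E j = {\<omega> \<in> space M. (A (sample_path \<omega>) \<and> defect (t + j) (sample_path \<omega>) \<le> rate ^ j * a)
    \<and> kick (t + j) (sample_path \<omega>)}" for j
  define b where "b j = band_const * a * prob {\<omega> \<in> space M. A (sample_path \<omega>)} * rate ^ j" for j
  have E: "E j \<in> events" for j unfolding E_def by (rule escape_step_event(3)[OF assms(1,2)])
  have "prob (E j) \<le> band_const * (rate ^ j * a) * prob {\<omega> \<in> space M. A (sample_path \<omega>) \<and> defect (t + j) (sample_path \<omega>) \<le> rate ^ j * a}" for j
    unfolding E_def using escape_step_event(1,2)[OF assms(1,2)] rate_pos assms(3)
    by (intro prob_kick_le) auto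
  also have "\<dots> j \<le> b j" for j
    unfolding b_def using band_const_nonneg rate_pos assms(1-3)
    by (auto simp: mult_ac intro!: mult_left_mono finite_measure_mono sets_prefix_event)
  finally have Eb: "prob (E j) \<le> b j" for j .
  have b: "summable b" unfolding b_def using rate_pos rate_less_1 by (intro summable_mult summable_geometric) simp
  have b_nonneg: "0 \<le> b j" for j unfolding b_def using band_const_nonneg rate_pos assms(3) by simp
  have "prob {\<omega> \<in> space M. A (sample_path \<omega>) \<and> escape t a (sample_path \<omega>)} = prob (\<Union>j. E j)"
    by (simp add: escape_event_eq E_def)
  also have "\<dots> \<le> (\<Sum>j. prob (E j))"
    using E Eb b_nonneg by (intro finite_measure_subadditive_countably summable_comparison_test'[OF b]) auto
  also have "\<dots> \<le> (\<Sum>j. b j)"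
    using Eb b b_nonneg by (intro suminf_le summable_comparison_test'[OF b]) auto
  also have "\<dots> = band_const * a / (1 - rate) * prob {\<omega> \<in> space M. A (sample_path \<omega>)}"
    unfolding b_def using rate_pos rate_less_1 by (simp add: suminf_mult suminf_geometric)
  finally show ?thesis .
qed

primrec reset :: "real \<Rightarrow> nat \<Rightarrow> nat \<Rightarrow> (nat \<Rightarrow> real^'d) \<Rightarrow> bool" where
  "reset \<delta> b 0 f \<longleftrightarrow> f b \<in> sphere 0 1 \<and> (\<forall>j. traj b f $ j \<bullet> f b \<noteq> 0)"
| "reset \<delta> b (Suc k) f \<longleftrightarrow> reset \<delta> b k f \<and> f (b + Suc k) \<in> sphere_cap (f b) \<delta>"

lemma reset_imp:
  assumes "reset \<delta> b K f"
  shows "f b \<in> sphere 0 1" "\<And>j. traj b f $ j \<bullet> f b \<noteq> 0"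
    and "\<And>i. 0 < i \<Longrightarrow> i \<le> K \<Longrightarrow> f (b + i) \<in> sphere_cap (f b) \<delta>"
  using assms by (induction K) (auto simp: le_Suc_eq)

lemma depends_on_prefix_reset: "depends_on_prefix (b + Suc K) (reset \<delta> b K)"
proof (induction K)
  case 0
  show ?case by (simp add: depends_on_prefix_def traj_restrict)
next
  case (Suc K)
  then show ?case
    using depends_on_prefix_mono[OF Suc, of "b + Suc (Suc K)"] by (simp add: depends_on_prefix_def)
qed

lemma pred_reset: "Measurable.pred (history (b + Suc K)) (reset \<delta> b K)"
proof (induction K)
  case 0
  have [measurable]: "(\<lambda>f. traj b f $ j) \<in> borel_measurable (history (b + Suc 0))" for j
    using measurable_traj[of b "b + Suc 0"] by measurable
  have [measurable]: "(\<lambda>f. f b) \<in> borel_measurable (history (b + Suc 0))"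
    by (simp add: measurable_history_nth)
  show ?case unfolding reset.simps by measurable
next
  case (Suc K)
  have [measurable]: "Measurable.pred (history (b + Suc (Suc K))) (reset \<delta> b K)"
    using pred_history_mono[OF depends_on_prefix_reset Suc] by simp
  have [measurable]: "(\<lambda>f. f b) \<in> borel_measurable (history (b + Suc (Suc K)))"
    "(\<lambda>f. f (b + Suc K)) \<in> borel_measurable (history (b + Suc (Suc K)))"
    by (simp_all add: measurable_history_nth)
  show ?case unfolding reset.simps sphere_cap_def Int_iff mem_ball by measurable
qed

lemma AE_nonorthogonal:
  assumes "\<And>j::'n. norm (x j) = 1"
  shows "AE \<omega> in M. \<xi> s \<omega> \<in> sphere 0 1 \<and> (\<forall>j. x j \<bullet> \<xi> s \<omega> \<noteq> 0)"
proof -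
  have "prob {\<omega> \<in> space M. \<xi> s \<omega> \<notin> sphere 0 1 \<or> \<bar>x j \<bullet> \<xi> s \<omega>\<bar> \<le> 0} = 0" for j
    using prob_band_le[OF assms, of 0 s] measure_nonneg[of M] by (simp add: order.antisym)
  then have "AE \<omega> in M. \<not> (\<xi> s \<omega> \<notin> sphere 0 1 \<or> \<bar>x j \<bullet> \<xi> s \<omega>\<bar> \<le> 0)" for j
    by (subst prob_Collect_eq_0[symmetric]) measurable
  then have "AE \<omega> in M. \<forall>j. \<xi> s \<omega> \<in> sphere 0 1 \<and> x j \<bullet> \<xi> s \<omega> \<noteq> 0"
    by (subst AE_all_countable) simp
  then show ?thesis by eventually_elim auto
qed

lemma prob_reset_0_ge:
  assumes A: "depends_on_prefix b A" "Measurable.pred (history b) A"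
  shows "prob {\<omega> \<in> space M. A (sample_path \<omega>)}
    \<le> prob {\<omega> \<in> space M. A (sample_path \<omega>) \<and> reset \<delta> b 0 (sample_path \<omega>)}"
proof -
  define Q where "Q f z \<longleftrightarrow> z \<in> sphere 0 1 \<and> (\<forall>j. traj b f $ j \<bullet> z \<noteq> 0)" for f z
  have "1 * prob {\<omega> \<in> space M. A (sample_path \<omega>)}
      \<le> prob {\<omega> \<in> space M. A (sample_path \<omega>) \<and> Q (sample_path \<omega>) (\<xi> b \<omega>)}"
  proof (rule prob_past_present_ge[OF A])
    show "depends_on_prefix b (\<lambda>f. Q f z)" for z
      by (simp add: depends_on_prefix_def Q_def traj_restrict)
    have [measurable]: "(\<lambda>x. traj b (fst x) $ j) \<in> borel_measurable (history b \<Otimes>\<^sub>M borel)" for j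
      using measurable_traj[of b b] by measurable
    show "Measurable.pred (history b \<Otimes>\<^sub>M borel) (\<lambda>x. Q (fst x) (snd x))"
      unfolding Q_def by measurable
    fix h
    have "AE \<omega> in M. Q h (\<xi> b \<omega>)"
      unfolding Q_def by (rule AE_nonorthogonal) (rule norm_traj)
    then show "1 \<le> prob {\<omega> \<in> space M. Q h (\<xi> b \<omega>)}"
      by (subst prob_Collect_eq_1[THEN iffD2]) (auto simp: Q_def, measurable)
  qed simp
  then show ?thesis unfolding Q_def reset.simps sample_path_nth by simp
qed

lemma prob_reset_ge:
  assumes A: "depends_on_prefix b A" "Measurable.pred (history b) A" and "0 < \<delta>" "\<delta> \<le> 1"
  shows "cap_const \<delta> ^ K * prob {\<omega> \<in> space M. A (sample_path \<omega>)}
    \<le> prob {\<omega> \<in> space M. A (sample_path \<omega>) \<and> reset \<delta> b K (sample_path \<omega>)}"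
proof (induction K)
  case 0
  then show ?case using prob_reset_0_ge[OF A] by simp
next
  case (Suc K)
  define Q where "Q f z \<longleftrightarrow> z \<in> sphere_cap (f b) \<delta>" for f :: "nat \<Rightarrow> real^'d" and z
  define R where "R f \<longleftrightarrow> A f \<and> reset \<delta> b K f" for f
  have "cap_const \<delta> * prob {\<omega> \<in> space M. R (sample_path \<omega>)}
      \<le> prob {\<omega> \<in> space M. R (sample_path \<omega>) \<and> Q (sample_path \<omega>) (\<xi> (b + Suc K) \<omega>)}"
  proof (rule prob_past_present_ge)
    show dep: "depends_on_prefix (b + Suc K) R"
      using depends_on_prefix_mono[OF A(1), of "b + Suc K"] depends_on_prefix_reset[where b = b and K = K and \<delta> = \<delta>]
      by (auto simp: R_def depends_on_prefix_def)
    show "Measurable.pred (history (b + Suc K)) R"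
      using pred_history_mono[OF A, of "b + Suc K"] pred_reset[where b = b and K = K and \<delta> = \<delta>] unfolding R_def by measurable
    show "depends_on_prefix (b + Suc K) (\<lambda>f. Q f z)" for z
      by (simp add: depends_on_prefix_def Q_def)
    have [measurable]: "(\<lambda>x. fst x b) \<in> borel_measurable (history (b + Suc K) \<Otimes>\<^sub>M borel)"
      using measurable_history_nth[of b "b + Suc K"] by measurable
    show "Measurable.pred (history (b + Suc K) \<Otimes>\<^sub>M borel) (\<lambda>x. Q (fst x) (snd x))"
      unfolding Q_def sphere_cap_def Int_iff mem_ball by measurable
    show "0 \<le> cap_const \<delta>" using cap_const_pos[OF \<open>0 < \<delta>\<close>] by simp
    fix h assume "R h"
    then have "h b \<in> sphere 0 1" unfolding R_def using reset_imp(1) by blast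
    then show "cap_const \<delta> \<le> prob {\<omega> \<in> space M. Q h (\<xi> (b + Suc K) \<omega>)}"
      unfolding Q_def using assms(3,4) by (intro prob_cap_ge) auto
  qed
  moreover have "cap_const \<delta> ^ Suc K * prob {\<omega> \<in> space M. A (sample_path \<omega>)}
      \<le> cap_const \<delta> * prob {\<omega> \<in> space M. R (sample_path \<omega>)}"
    using Suc cap_const_pos[OF \<open>0 < \<delta>\<close>] by (auto simp: R_def mult.assoc intro: mult_left_mono)
  ultimately show ?case unfolding R_def Q_def reset.simps sample_path_nth by (simp add: conj_assoc)
qed

lemma defect_reset_le:
  assumes "reset \<delta> b K f" "0 \<le> \<delta>" "\<delta> \<le> 1/2" "\<delta> / (1 - rate) \<le> 1" "\<delta> \<le> \<eta> / (1 + \<eta>)"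
  shows "defect (b + Suc K) f \<le> 2 * CARD('n) * (2 * rate ^ K + \<delta> / (1 - rate))"
proof -
  have "traj (b + Suc K) f = hjmr_traj \<eta> (traj b f) (\<lambda>i. f (b + i)) (Suc K)"
    by (simp only: traj_def hjmr_traj_add)
  moreover have "norm (f (b + i)) = 1 \<and> norm (f (b + i) - f (b + 0)) < \<delta>" if "0 < i" "i \<le> K" for i
    using reset_imp(3)[OF assms(1) that] by (simp add: sphere_cap_def dist_norm norm_minus_commute)
  ultimately show ?thesis
    unfolding defect_def using reset_imp(1,2)[OF assms(1)] assms(2-5) eta_pos norm_traj
    by (simp only:) (rule polar_defect_hjmr_traj_reset, auto)
qed

lemma exists_reset_bound:
  assumes "0 < r"
  shows "\<exists>\<delta> K. 0 < \<delta> \<and> \<delta> \<le> 1 \<and> (\<forall>b f. reset \<delta> b K f \<longrightarrow> defect (b + Suc K) f \<le> r)"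
proof -
  define n where "n = real CARD('n)"
  define \<delta> where "\<delta> = min (1/2) (min (1 - rate) (min (\<eta> / (1 + \<eta>)) ((1 - rate) * r / (4 * n))))"
  have n: "0 < n" by (simp add: n_def)
  have \<delta>: "\<delta> \<le> 1/2" "\<delta> \<le> 1 - rate" "\<delta> \<le> \<eta> / (1 + \<eta>)" "\<delta> \<le> (1 - rate) * r / (4 * n)"
    unfolding \<delta>_def by (meson min.cobounded1 min.cobounded2 order_trans)+
  have "0 < \<delta>"
    unfolding \<delta>_def using rate_less_1 eta_pos assms n by simp
  obtain K where K: "rate ^ K < r / (8 * n)"
    using real_arch_pow_inv[of "r / (8 * n)" rate] assms n rate_pos rate_less_1 by auto
  have "\<delta> / (1 - rate) \<le> r / (4 * n)"
    using \<delta>(4) rate_less_1 by (simp add: divide_le_eq mult.commute)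
  then have "2 * n * (\<delta> / (1 - rate)) \<le> r / 2"
    using n by (simp add: field_simps)
  moreover have "2 * n * (2 * rate ^ K) \<le> r / 2"
    using K n by (simp add: field_simps)
  ultimately have "2 * n * (2 * rate ^ K + \<delta> / (1 - rate)) \<le> r"
    by (simp add: distrib_left)
  moreover have "\<delta> / (1 - rate) \<le> 1" using \<delta>(2) rate_less_1 by simp
  ultimately show ?thesis
    using \<delta> \<open>0 < \<delta>\<close> defect_reset_le[of \<delta> _ K] unfolding n_def
    by (intro exI[of _ \<delta>] exI[of _ K]) (auto intro: order.trans)
qed

lemma prob_block_ge:
  assumes A: "depends_on_prefix b A" "Measurable.pred (history b) A"
    and \<delta>: "0 < \<delta>" "\<delta> \<le> 1" and reset_bound: "\<And>b f. reset \<delta> b K f \<Longrightarrow> defect (b + Suc K) f \<le> r"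
    and r: "0 \<le> r" "band_const * r / (1 - rate) \<le> 1/2"
  shows "cap_const \<delta> ^ K / 2 * prob {\<omega> \<in> space M. A (sample_path \<omega>)}
    \<le> prob {\<omega> \<in> space M. A (sample_path \<omega>) \<and> defect (b + Suc K + J) (sample_path \<omega>) \<le> rate ^ J * r}"
proof -
  define t where "t = b + Suc K"
  define R where "R f \<longleftrightarrow> A f \<and> reset \<delta> b K f" for f
  define G where "G = {\<omega> \<in> space M. A (sample_path \<omega>) \<and> defect (t + J) (sample_path \<omega>) \<le> rate ^ J * r}"
  have dep_R: "depends_on_prefix t R"
    using depends_on_prefix_mono[OF A(1), of t] depends_on_prefix_reset[where b = b and K = K and \<delta> = \<delta>]
    by (auto simp: R_def t_def depends_on_prefix_def)
  have pred_R: "Measurable.pred (history t) R"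
    using pred_history_mono[OF A, of t] pred_reset[where b = b and K = K and \<delta> = \<delta>]
    unfolding R_def t_def by measurable
  have R_ev: "{\<omega> \<in> space M. R (sample_path \<omega>)} \<in> events" by (rule sets_prefix_event[OF dep_R pred_R])
  have "G \<in> events"
    unfolding G_def
  proof (rule sets_prefix_event)
    show "depends_on_prefix (t + J) (\<lambda>f. A f \<and> defect (t + J) f \<le> rate ^ J * r)"
      using depends_on_prefix_mono[OF A(1), of "t + J"] by (auto simp: t_def depends_on_prefix_def defect_restrict)
    have [measurable]: "defect (t + J) \<in> borel_measurable (history (t + J))" by (simp add: measurable_defect)
    have "b \<le> t + J" by (simp add: t_def)
    from pred_history_mono[OF A this]
    show "Measurable.pred (history (t + J)) (\<lambda>f. A f \<and> defect (t + J) f \<le> rate ^ J * r)"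
      by measurable
  qed
  moreover have E_ev: "{\<omega> \<in> space M. R (sample_path \<omega>) \<and> escape t r (sample_path \<omega>)} \<in> events"
    by (rule sets_escape_event[OF dep_R pred_R])
  moreover have "{\<omega> \<in> space M. R (sample_path \<omega>)} \<subseteq> G \<union> {\<omega> \<in> space M. R (sample_path \<omega>) \<and> escape t r (sample_path \<omega>)}"
    using reset_bound defect_decay by (fastforce simp: G_def R_def t_def)
  ultimately have "prob {\<omega> \<in> space M. R (sample_path \<omega>)} \<le> prob G + prob {\<omega> \<in> space M. R (sample_path \<omega>) \<and> escape t r (sample_path \<omega>)}"
    using R_ev by (intro order.trans[OF finite_measure_mono measure_Un_le]) auto
  also have "\<dots> \<le> prob G + band_const * r / (1 - rate) * prob {\<omega> \<in> space M. R (sample_path \<omega>)}"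
    using prob_escape_le[OF dep_R pred_R r(1)] by simp
  also have "\<dots> \<le> prob G + 1/2 * prob {\<omega> \<in> space M. R (sample_path \<omega>)}"
    using r(2) by (intro add_left_mono mult_right_mono) auto
  finally have "prob {\<omega> \<in> space M. R (sample_path \<omega>)} / 2 \<le> prob G" by simp
  moreover have "cap_const \<delta> ^ K * prob {\<omega> \<in> space M. A (sample_path \<omega>)} \<le> prob {\<omega> \<in> space M. R (sample_path \<omega>)}"
    unfolding R_def by (rule prob_reset_ge[OF A \<delta>])
  ultimately show ?thesis by (simp add: G_def t_def)
qed

lemma cap_const_le_1:
  assumes "0 < \<delta>" "\<delta> \<le> 1"
  shows "cap_const \<delta> \<le> 1"
proof -
  obtain i :: 'd where True by simp
  have "cap_const \<delta> \<le> prob {\<omega> \<in> space M. \<xi> 0 \<omega> \<in> sphere_cap (axis i 1) \<delta>}"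
    using assms by (intro prob_cap_ge) auto
  also have "\<dots> \<le> 1" by simp
  finally show ?thesis .
qed

definition above_block_ends :: "nat \<Rightarrow> real \<Rightarrow> nat \<Rightarrow> (nat \<Rightarrow> real^'d) \<Rightarrow> bool" where
  "above_block_ends L \<rho> k f \<longleftrightarrow> (\<forall>k'<k. \<rho> < defect (Suc k' * L) f)"

lemma depends_on_prefix_above_block_ends: "depends_on_prefix (k * L) (above_block_ends L \<rho> k)"
proof -
  have "Suc k' * L \<le> k * L" if "k' < k" for k' using that by (intro mult_le_mono1) simp
  then show ?thesis
    by (auto simp: depends_on_prefix_def above_block_ends_def defect_restrict)
qed

lemma pred_above_block_ends: "Measurable.pred (history (k * L)) (above_block_ends L \<rho> k)"
proof (induction k)
  case (Suc k)
  have "above_block_ends L \<rho> (Suc k) = (\<lambda>f. above_block_ends L \<rho> k f \<and> \<rho> < defect (Suc k * L) f)"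
    by (auto simp: above_block_ends_def less_Suc_eq fun_eq_iff)
  moreover have [measurable]: "Measurable.pred (history (Suc k * L)) (above_block_ends L \<rho> k)"
    by (rule pred_history_mono[OF depends_on_prefix_above_block_ends Suc]) simp
  moreover have [measurable]: "defect (Suc k * L) \<in> borel_measurable (history (Suc k * L))"
    by (simp add: measurable_defect)
  ultimately show ?case by simp
qed (simp add: above_block_ends_def)

text \<open>Whatever happened before, a block ends below the threshold with conditional probability at
  least \<open>cap_const \<delta> ^ K / 2\<close>.\<close>
lemma prob_above_block_ends_le:
  assumes \<delta>: "0 < \<delta>" "\<delta> \<le> 1" and reset_bound: "\<And>b f. reset \<delta> b K f \<Longrightarrow> defect (b + Suc K) f \<le> r"
    and r: "0 \<le> r" "band_const * r / (1 - rate) \<le> 1/2"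
  shows "prob {\<omega> \<in> space M. above_block_ends (Suc K + J) (rate ^ J * r) k (sample_path \<omega>)}
    \<le> (1 - cap_const \<delta> ^ K / 2) ^ k"
proof (induction k)
  case (Suc k)
  define L where "L = Suc K + J"
  define \<rho> where "\<rho> = rate ^ J * r"
  define q where "q = cap_const \<delta> ^ K / 2"
  have q: "0 \<le> q" "q \<le> 1"
    using cap_const_pos[OF \<delta>(1)] cap_const_le_1[OF \<delta>] power_le_one[of "cap_const \<delta>" K]
    by (auto simp: q_def)
  define S where "S k = {\<omega> \<in> space M. above_block_ends L \<rho> k (sample_path \<omega>)}" for k
  define T where "T = {\<omega> \<in> space M. above_block_ends L \<rho> k (sample_path \<omega>) \<and> defect (k * L + Suc K + J) (sample_path \<omega>) \<le> \<rho>}"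
  have S_ev: "S k \<in> events" for k
    unfolding S_def by (rule sets_prefix_event[OF depends_on_prefix_above_block_ends pred_above_block_ends])
  have "q * prob (S k) \<le> prob T"
    unfolding q_def S_def T_def \<rho>_def
    by (rule prob_block_ge[OF depends_on_prefix_above_block_ends pred_above_block_ends \<delta> reset_bound r])
  moreover have "S (Suc k) = S k - T"
    by (auto simp: S_def T_def above_block_ends_def L_def less_Suc_eq algebra_simps)
  moreover have "T \<subseteq> S k" by (auto simp: S_def T_def)
  moreover have "T \<in> events"
    using S_ev[of k] unfolding S_def T_def by measurable
  ultimately have "prob (S (Suc k)) \<le> (1 - q) * prob (S k)"
    using S_ev by (simp add: finite_measure_Diff algebra_simps)
  also have "\<dots> \<le> (1 - q) * (1 - q) ^ k"
    using Suc q by (intro mult_left_mono) (auto simp: S_def L_def \<rho>_def q_def)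
  finally show ?case by (simp add: S_def L_def \<rho>_def q_def)
qed (simp add: above_block_ends_def)

lemma sets_escape_from:
  "{\<omega> \<in> space M. defect t (sample_path \<omega>) \<le> a \<and> escape t a (sample_path \<omega>)} \<in> events"
proof (rule sets_escape_event)
  show "depends_on_prefix t (\<lambda>f. defect t f \<le> a)" by (rule depends_on_prefix_defect) simp
  have [measurable]: "defect t \<in> borel_measurable (history t)" by (simp add: measurable_defect)
  show "Measurable.pred (history t) (\<lambda>f. defect t f \<le> a)" by measurable
qed

lemma prob_escape_from_le:
  assumes "0 \<le> a"
  shows "prob {\<omega> \<in> space M. defect t (sample_path \<omega>) \<le> a \<and> escape t a (sample_path \<omega>)} \<le> band_const * a / (1 - rate)"
proof -
  have [measurable]: "defect t \<in> borel_measurable (history t)" by (simp add: measurable_defect)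
  have "prob {\<omega> \<in> space M. defect t (sample_path \<omega>) \<le> a \<and> escape t a (sample_path \<omega>)}
      \<le> band_const * a / (1 - rate) * prob {\<omega> \<in> space M. defect t (sample_path \<omega>) \<le> a}"
    using assms by (intro prob_escape_le depends_on_prefix_defect) (auto, measurable)
  also have "\<dots> \<le> band_const * a / (1 - rate) * 1"
    using band_const_nonneg assms rate_less_1 by (intro mult_left_mono) auto
  finally show ?thesis by simp
qed

text \<open>The sample paths along which the defect does not vanish either stay above the threshold at
  the ends of the first \<open>m\<close> blocks, or escape after dropping below it at one of these ends.\<close>
lemma nonconvergence_covered:
  assumes \<delta>: "0 < \<delta>" "\<delta> \<le> 1" and reset_bound: "\<And>b f. reset \<delta> b K f \<Longrightarrow> defect (b + Suc K) f \<le> r"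
    and r: "0 \<le> r" "band_const * r / (1 - rate) \<le> 1/2"
  shows "\<exists>E\<in>events. {\<omega> \<in> space M. \<not> (\<lambda>n. defect n (sample_path \<omega>)) \<longlonglongrightarrow> 0} \<subseteq> E \<and>
    prob E \<le> (1 - cap_const \<delta> ^ K / 2) ^ m + real m * (band_const * r / (1 - rate)) * rate ^ J"
proof -
  define L where "L = Suc K + J"
  define \<rho> where "\<rho> = rate ^ J * r"
  have \<rho>: "0 \<le> \<rho>" using rate_pos r by (simp add: \<rho>_def)
  define F where "F k = {\<omega> \<in> space M. defect (Suc k * L) (sample_path \<omega>) \<le> \<rho> \<and>
    escape (Suc k * L) \<rho> (sample_path \<omega>)}" for k
  define A where "A = {\<omega> \<in> space M. above_block_ends L \<rho> m (sample_path \<omega>)}"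
  have F: "F k \<in> events" for k unfolding F_def by (rule sets_escape_from)
  have A: "A \<in> events"
    unfolding A_def by (rule sets_prefix_event[OF depends_on_prefix_above_block_ends pred_above_block_ends])
  have "{\<omega> \<in> space M. \<not> (\<lambda>n. defect n (sample_path \<omega>)) \<longlonglongrightarrow> 0} \<subseteq> A \<union> (\<Union>k<m. F k)"
  proof
    fix \<omega> assume "\<omega> \<in> {\<omega> \<in> space M. \<not> (\<lambda>n. defect n (sample_path \<omega>)) \<longlonglongrightarrow> 0}"
    then have \<omega>: "\<omega> \<in> space M" and "\<not> (\<lambda>n. defect n (sample_path \<omega>)) \<longlonglongrightarrow> 0" by auto
    then have escapes: "escape (Suc k * L) \<rho> (sample_path \<omega>)"
      if "defect (Suc k * L) (sample_path \<omega>) \<le> \<rho>" for k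
      using defect_tendsto_zero that by blast
    show "\<omega> \<in> A \<union> (\<Union>k<m. F k)"
    proof (cases "above_block_ends L \<rho> m (sample_path \<omega>)")
      case False
      then obtain k where "k < m" "defect (Suc k * L) (sample_path \<omega>) \<le> \<rho>"
        by (auto simp: above_block_ends_def not_less)
      with escapes \<omega> show ?thesis by (auto simp: F_def)
    qed (use \<omega> in \<open>simp add: A_def\<close>)
  qed
  moreover have "prob (A \<union> (\<Union>k<m. F k)) \<le> prob A + (\<Sum>k<m. prob (F k))"
    using A F by (intro order.trans[OF measure_Un_le] add_left_mono finite_measure_subadditive_finite) auto
  moreover have "prob A \<le> (1 - cap_const \<delta> ^ K / 2) ^ m"
    unfolding A_def L_def \<rho>_def by (rule prob_above_block_ends_le[OF \<delta> reset_bound r])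
  moreover have "(\<Sum>k<m. prob (F k)) \<le> real m * (band_const * r / (1 - rate)) * rate ^ J"
    using sum_bounded_above[of "{..<m}" "\<lambda>k. prob (F k)" "band_const * \<rho> / (1 - rate)"]
      prob_escape_from_le[OF \<rho>] by (simp add: F_def \<rho>_def mult_ac)
  moreover have "A \<union> (\<Union>k<m. F k) \<in> events" using A F by auto
  ultimately show ?thesis by (intro bexI[of _ "A \<union> (\<Union>k<m. F k)"]) auto
qed

lemma nonconvergence_in_small_event:
  assumes "0 < \<epsilon>"
  shows "\<exists>E\<in>events. {\<omega> \<in> space M. \<not> (\<lambda>n. defect n (sample_path \<omega>)) \<longlonglongrightarrow> 0} \<subseteq> E \<and> prob E \<le> \<epsilon>"
proof -
  define r where "r = (1 - rate) / (2 * (band_const + 1))"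
  have "band_const * r / (1 - rate) = band_const / (2 * (band_const + 1))"
    using rate_less_1 by (simp add: r_def)
  then have r: "0 < r" "band_const * r / (1 - rate) \<le> 1/2"
    using rate_less_1 band_const_nonneg by (simp_all add: r_def)
  obtain \<delta> K where \<delta>: "0 < \<delta>" "\<delta> \<le> 1"
    and reset_bound: "\<And>b f. reset \<delta> b K f \<Longrightarrow> defect (b + Suc K) f \<le> r"
    using exists_reset_bound[OF r(1)] by blast
  have "0 < cap_const \<delta> ^ K / 2" using cap_const_pos[OF \<delta>(1)] by simp
  then obtain m where m: "(1 - cap_const \<delta> ^ K / 2) ^ m < \<epsilon> / 2"
    using real_arch_pow_inv[of "\<epsilon> / 2" "1 - cap_const \<delta> ^ K / 2"] assms by auto
  define Z where "Z = real m * (band_const * r / (1 - rate)) + 1"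
  have Z: "0 < Z" using r band_const_nonneg rate_less_1 by (simp add: Z_def add_nonneg_pos)
  obtain J where J: "rate ^ J < \<epsilon> / 2 / Z"
    using real_arch_pow_inv[of "\<epsilon> / 2 / Z" rate] assms Z rate_less_1 by auto
  have "real m * (band_const * r / (1 - rate)) * rate ^ J \<le> Z * rate ^ J"
    using rate_pos by (intro mult_right_mono) (auto simp: Z_def)
  also have "\<dots> \<le> \<epsilon> / 2" using J Z by (simp add: field_simps)
  finally have "(1 - cap_const \<delta> ^ K / 2) ^ m + real m * (band_const * r / (1 - rate)) * rate ^ J \<le> \<epsilon>"
    using m by linarith
  moreover have "\<exists>E\<in>events. {\<omega> \<in> space M. \<not> (\<lambda>n. defect n (sample_path \<omega>)) \<longlonglongrightarrow> 0} \<subseteq> E \<and>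
      prob E \<le> (1 - cap_const \<delta> ^ K / 2) ^ m + real m * (band_const * r / (1 - rate)) * rate ^ J"
    by (rule nonconvergence_covered[OF \<delta> reset_bound less_imp_le[OF r(1)] r(2)])
  ultimately show ?thesis by (meson order.trans)
qed

lemma AE_defect_tendsto_zero: "AE \<omega> in M. (\<lambda>n. defect n (sample_path \<omega>)) \<longlonglongrightarrow> 0"
  using nonconvergence_in_small_event by (intro AE_if_small_supersets) blast

end

theorem theorem3p2:
  fixes M :: "'w measure" and \<xi> :: "nat \<Rightarrow> 'w \<Rightarrow> real^'d"
    and \<eta> C C' :: real and X0 :: "real^'d^'n"
  assumes "prob_space M"
    and "\<eta> > 0"
    and rv: "\<And>t. \<xi> t \<in> borel_measurable M"
    and indep: "prob_space.indep_vars M (\<lambda>_. borel) \<xi> UNIV"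
    and ident: "\<And>t. distr M borel (\<xi> t) = distr M borel (\<xi> 0)"
    and on_sphere: "\<And>t. AE \<omega> in M. \<xi> t \<omega> \<in> sphere 0 1"
    and "C > 0" and "C' > 0"
    and bounds: "\<And>t A. A \<in> sets borel \<Longrightarrow> A \<subseteq> sphere 0 1 \<Longrightarrow>
        C * sphere_mu A \<le> measure M (\<xi> t -` A \<inter> space M) \<and>
        measure M (\<xi> t -` A \<inter> space M) \<le> C' * sphere_mu A"
    and X0: "\<And>i. X0 $ i \<in> sphere 0 1"
  shows "AE \<omega> in M.
    ((\<lambda>t. infdist (hjmr_traj \<eta> X0 (\<lambda>s. \<xi> s \<omega>) t) polarized) \<longlonglongrightarrow> 0)"
proof -
  obtain i0 :: 'n where True by simp
  have X0_unit: "\<And>i. norm (X0 $ i) = 1" using X0 by simp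
  interpret signed_hjmr M \<xi> \<eta> C C' X0 i0
    by (intro signed_hjmr.intro indep_sequence.intro indep_sequence_axioms.intro
        signed_hjmr_axioms.intro) (fact assms X0_unit)+
  show ?thesis
    using AE_defect_tendsto_zero
  proof eventually_elim
    case (elim \<omega>)
    have "sample_path \<omega> = (\<lambda>s. \<xi> s \<omega>)" by (simp add: fun_eq_iff sample_path_nth)
    then have "infdist (hjmr_traj \<eta> X0 (\<lambda>s. \<xi> s \<omega>) t) polarized \<le> defect t (sample_path \<omega>)" for t
      using infdist_polarized_le_polar_defect[OF norm_traj] by (simp add: defect_def traj_def)
    then have "\<forall>\<^sub>F t in sequentially. infdist (hjmr_traj \<eta> X0 (\<lambda>s. \<xi> s \<omega>) t) polarized \<le> defect t (sample_path \<omega>)"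
      by simp
    then show ?case
      by (intro tendsto_sandwich[OF always_eventually _ tendsto_const elim]) (simp_all add: infdist_nonneg)
  qed
qed

end
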